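(* Let $D\subsetneq\mathbb C$ be a domain and $x_0\in D$ with $\int_D k_D(x,x_0)^2dx<\infty$, and fix a Whitney decomposition $\mathcal W(D)$. There is a constant $C>0$ (depending only on $D$, $x_0$) such that the following holds: if $\gamma$ is a quasihyperbolic geodesic passing through $x_0$, $j_0\in\mathbb N$, and $\beta$ is a subpath of $\gamma$ that intersects only Whitney cubes $Q\in\mathcal W(D)$ with $j(Q)\ge j_0$, then $\mathrm{length}(\beta)\le C j_0^{-1/2}$. In particular, $D$ is bounded.
   Context: $\delta_D(x)=\mathrm{dist}(x,\partial D)$; quasihyperbolic distance $k_D(x_1,x_2)=\inf_\gamma\int_\gamma\delta_D^{-1}ds$ over rectifiable paths in $D$ joining $x_1,x_2$; a quasihyperbolic geodesic is a simple curve in $D$ (possibly on a half-open interval) along which the $\delta_D^{-1}$-length of each subpath equals the quasihyperbolic distance of its endpoints. A Whitney decomposition $\mathcal W(D)$ is a collection of closed dyadic squares ("cubes") $Q\subset D$ with disjoint interiors, union $D$, with $\sqrt2\,\ell(Q)<\mathrm{dist}(Q,\partial D)\le4\sqrt2\,\ell(Q)$ ($\ell(Q)$ the side length), and $1/4\le\ell(Q_1)/\ell(Q_2)\le4$ whenever $Q_1\cap Q_2\ne\emptyset$. For $Q\in\mathcal W(D)$, $j(Q)$ is the unique $j\in\mathbb N$ with $Q\in D_j\setminus D_{j-1}$, where $D_0=\emptyset$ and $D_j=\{Q\in\mathcal W(D):k_D(x_0,Q)\le j\}$. *)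

theory Defs
  imports "HOL-Analysis.Analysis"
begin

definition bdist :: "complex set \<Rightarrow> complex \<Rightarrow> real" where
  "bdist D x = infdist x (- D)"

definition is_partition :: "real \<Rightarrow> real \<Rightarrow> (nat \<Rightarrow> real) \<Rightarrow> nat \<Rightarrow> bool" where
  "is_partition a b t n \<longleftrightarrow> t 0 = a \<and> t n = b \<and> (\<forall>i<n. t i \<le> t (Suc i))"

definition curve_length :: "(real \<Rightarrow> complex) \<Rightarrow> real \<Rightarrow> real \<Rightarrow> ereal" where
  "curve_length g a b =
     (SUP p \<in> {(t, n). is_partition a b t n}.
        ereal (\<Sum>i < snd p. cmod (g (fst p (Suc i)) - g (fst p i))))"

definition curve_length_on :: "(real \<Rightarrow> complex) \<Rightarrow> real set \<Rightarrow> ereal" where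
  "curve_length_on g J = (SUP p \<in> {(s, t). s \<in> J \<and> t \<in> J \<and> s \<le> t}. curve_length g (fst p) (snd p))"

(* quasihyperbolic (delta_D^{-1}-)length of g on [a,b]:
   integral of 1/delta_D with respect to arc length, realised as the supremum of
   lower Riemann-Stieltjes sums *)
definition qh_length :: "complex set \<Rightarrow> (real \<Rightarrow> complex) \<Rightarrow> real \<Rightarrow> real \<Rightarrow> ereal" where
  "qh_length D g a b =
     (SUP p \<in> {(t, n). is_partition a b t n}.
        ereal (\<Sum>i < snd p. (INF s \<in> {fst p i .. fst p (Suc i)}. 1 / bdist D (g s))
                             * cmod (g (fst p (Suc i)) - g (fst p i))))"

definition qhdist :: "complex set \<Rightarrow> complex \<Rightarrow> complex \<Rightarrow> real" where
  "qhdist D x y = real_of_ereal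
     (INF g \<in> {g. path g \<and> path_image g \<subseteq> D \<and> pathstart g = x \<and> pathfinish g = y
                  \<and> curve_length g 0 1 < \<infinity>}. qh_length D g 0 1)"

definition qhdist_set :: "complex set \<Rightarrow> complex \<Rightarrow> complex set \<Rightarrow> real" where
  "qhdist_set D x0 Q = (INF x \<in> Q. qhdist D x0 x)"

definition qh_geodesic :: "complex set \<Rightarrow> (real \<Rightarrow> complex) \<Rightarrow> real set \<Rightarrow> bool" where
  "qh_geodesic D g I \<longleftrightarrow>
     continuous_on I g \<and> inj_on g I \<and> g ` I \<subseteq> D \<and>
     (\<forall>s\<in>I. \<forall>t\<in>I. s \<le> t \<longrightarrow> qh_length D g s t = ereal (qhdist D (g s) (g t)))"

definition dyadic_sq :: "int \<Rightarrow> int \<Rightarrow> int \<Rightarrow> complex set" where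
  "dyadic_sq k m n = {z. m * 2 powi k \<le> Re z \<and> Re z \<le> (m + 1) * 2 powi k \<and>
                         n * 2 powi k \<le> Im z \<and> Im z \<le> (n + 1) * 2 powi k}"

definition is_dyadic_sq :: "complex set \<Rightarrow> bool" where
  "is_dyadic_sq Q \<longleftrightarrow> (\<exists>k m n. Q = dyadic_sq k m n)"

definition side :: "complex set \<Rightarrow> real" where
  "side Q = (THE l. \<exists>k m n. Q = dyadic_sq k m n \<and> l = 2 powi k)"

definition whitney :: "complex set \<Rightarrow> complex set set \<Rightarrow> bool" where
  "whitney D W \<longleftrightarrow>
     (\<forall>Q\<in>W. is_dyadic_sq Q \<and> Q \<subseteq> D) \<and>
     (\<forall>Q1\<in>W. \<forall>Q2\<in>W. Q1 \<noteq> Q2 \<longrightarrow> interior Q1 \<inter> interior Q2 = {}) \<and>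
     \<Union>W = D \<and>
     (\<forall>Q\<in>W. sqrt 2 * side Q < setdist Q (frontier D) \<and>
              setdist Q (frontier D) \<le> 4 * sqrt 2 * side Q) \<and>
     (\<forall>Q1\<in>W. \<forall>Q2\<in>W. Q1 \<inter> Q2 \<noteq> {} \<longrightarrow>
        1/4 \<le> side Q1 / side Q2 \<and> side Q1 / side Q2 \<le> 4)"

definition Dlayer :: "complex set \<Rightarrow> complex set set \<Rightarrow> complex \<Rightarrow> nat \<Rightarrow> complex set set" where
  "Dlayer D W x0 j = (if j = 0 then {} else {Q \<in> W. qhdist_set D x0 Q \<le> real j})"

definition jidx :: "complex set \<Rightarrow> complex set set \<Rightarrow> complex \<Rightarrow> complex set \<Rightarrow> nat" where
  "jidx D W x0 Q = (THE j. j \<ge> 1 \<and> Q \<in> Dlayer D W x0 j - Dlayer D W x0 (j - 1))"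

end

(*
  Subdivide a subarc of the geodesic finely, with pieces of \<delta>\<^sub>D\<^sup>-\<^sup>1-length L\<^sub>i starting at points
  z\<^sub>i of distance \<delta>\<^sub>i to the boundary, and let U\<^sub>i be the \<delta>\<^sub>D\<^sup>-\<^sup>1-length of the arc from x\<^sub>0 to z\<^sub>i.
  The Euclidean length is at most \<Sum> 2 \<delta>\<^sub>i L\<^sub>i, and by AM-GM, for any \<lambda> > 0,
    \<Sum> 2 \<delta>\<^sub>i L\<^sub>i \<le> \<lambda> \<Sum> L\<^sub>i (U\<^sub>i + 1)\<^sup>2 \<delta>\<^sub>i\<^sup>2 + \<lambda>\<^sup>-\<^sup>1 \<Sum> L\<^sub>i / (U\<^sub>i + 1)\<^sup>2.
  The second sum telescopes to O(1/j\<^sub>0), since the arc starts at quasihyperbolic distance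
  at least j\<^sub>0 - 1 from x\<^sub>0. For the first, the balls B(z\<^sub>i, \<delta>\<^sub>i/2) overlap boundedly (a geodesic
  cannot spend much \<delta>\<^sub>D\<^sup>-\<^sup>1-length between two points close to the same w), and on them
  U\<^sub>i \<le> k\<^sub>D(w, x\<^sub>0) + 2; so the sum is bounded by the integral of (k\<^sub>D(w, x\<^sub>0) + 3)\<^sup>2, which
  is finite by hypothesis. Taking \<lambda> = j\<^sub>0\<^sup>-\<^sup>1\<^sup>/\<^sup>2 gives the bound C j\<^sub>0\<^sup>-\<^sup>1\<^sup>/\<^sup>2. Applied with j\<^sub>0 = 1
  to almost minimising paths from x\<^sub>0, the same estimate bounds every |z - x\<^sub>0|, z \<in> D.
*)
theory Submission
  imports Defs
begin

section \<open>Weighted length of a curve\<close>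

definition lower_term :: "(complex \<Rightarrow> real) \<Rightarrow> (real \<Rightarrow> complex) \<Rightarrow> (nat \<Rightarrow> real) \<Rightarrow> nat \<Rightarrow> real" where
  "lower_term w g t i = (INF s \<in> {t i .. t (Suc i)}. w (g s)) * cmod (g (t (Suc i)) - g (t i))"

definition lower_sum :: "(complex \<Rightarrow> real) \<Rightarrow> (real \<Rightarrow> complex) \<Rightarrow> (nat \<Rightarrow> real) \<Rightarrow> nat \<Rightarrow> real" where
  "lower_sum w g t n = (\<Sum>i<n. lower_term w g t i)"

definition wlength :: "(complex \<Rightarrow> real) \<Rightarrow> (real \<Rightarrow> complex) \<Rightarrow> real \<Rightarrow> real \<Rightarrow> ereal" where
  "wlength w g a b = (SUP p \<in> {(t, n). is_partition a b t n}. ereal (lower_sum w g (fst p) (snd p)))"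

lemma qh_length_eq_wlength: "qh_length D g a b = wlength (\<lambda>z. 1 / bdist D z) g a b"
  unfolding qh_length_def wlength_def lower_sum_def lower_term_def by simp

lemma partition_mono: "is_partition a b t n \<Longrightarrow> i \<le> j \<Longrightarrow> j \<le> n \<Longrightarrow> t i \<le> t j"
proof (induction j)
  case 0 then show ?case by simp
next
  case (Suc j)
  show ?case
  proof (cases "i = Suc j")
    case True then show ?thesis by simp
  next
    case False
    then have "t i \<le> t j" using Suc by auto
    also have "t j \<le> t (Suc j)" using Suc.prems unfolding is_partition_def by auto
    finally show ?thesis .
  qed
qed

lemma partition_range: "is_partition a b t n \<Longrightarrow> i \<le> n \<Longrightarrow> a \<le> t i \<and> t i \<le> b"
  using partition_mono[of a b t n 0 i] partition_mono[of a b t n i n]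
  unfolding is_partition_def by auto

lemma curve_length_eq_wlength: "curve_length g a b = wlength (\<lambda>z. 1) g a b"
  unfolding curve_length_def wlength_def lower_sum_def lower_term_def
proof (rule SUP_cong)
  fix p assume "p \<in> {(t, n). is_partition a b t n}"
  then have P: "is_partition a b (fst p) (snd p)" by auto
  have "(INF s\<in>{fst p i..fst p (Suc i)}. 1::real) = 1" if "i < snd p" for i
  proof -
    have "fst p i \<le> fst p (Suc i)" using P that unfolding is_partition_def by auto
    then have "{fst p i..fst p (Suc i)} \<noteq> {}" by auto
    then show ?thesis by simp
  qed
  then show "ereal (\<Sum>i<snd p. cmod (g (fst p (Suc i)) - g (fst p i))) =
    ereal (\<Sum>i<snd p. (INF s\<in>{fst p i..fst p (Suc i)}. 1) * cmod (g (fst p (Suc i)) - g (fst p i)))"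
    by simp
qed simp

lemma wlength_upper: "is_partition a b t n \<Longrightarrow> ereal (lower_sum w g t n) \<le> wlength w g a b"
  unfolding wlength_def by (rule SUP_upper2[where i="(t,n)"]) auto

lemma wlength_least: "(\<And>t n. is_partition a b t n \<Longrightarrow> ereal (lower_sum w g t n) \<le> Y) \<Longrightarrow> wlength w g a b \<le> Y"
  unfolding wlength_def by (rule SUP_least) auto

lemma lower_term_nonneg:
  assumes "\<And>z. 0 \<le> w z" "t i \<le> t (Suc i)"
  shows "0 \<le> lower_term w g t i"
  unfolding lower_term_def using assms by (auto intro!: cINF_greatest mult_nonneg_nonneg)

lemma lower_sum_nonneg:
  assumes "\<And>z. 0 \<le> w z" "is_partition a b t n"
  shows "0 \<le> lower_sum w g t n"
  unfolding lower_sum_def using assms by (auto intro!: sum_nonneg lower_term_nonneg simp: is_partition_def)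

lemma is_partition_trivial: "a \<le> b \<Longrightarrow> is_partition a b (\<lambda>i. if i = 0 then a else b) 1"
  unfolding is_partition_def by auto

lemma wlength_nonneg:
  assumes "\<And>z. 0 \<le> w z" "a \<le> b"
  shows "0 \<le> wlength w g a b"
proof -
  have "ereal (lower_sum w g (\<lambda>i. if i = 0 then a else b) 1) \<le> wlength w g a b"
    using wlength_upper is_partition_trivial assms by blast
  moreover have "0 \<le> lower_sum w g (\<lambda>i. if i = 0 then a else b) 1"
    using lower_sum_nonneg assms is_partition_trivial by blast
  ultimately show ?thesis by (meson ereal_less_eq(5) order_trans)
qed

lemma wlength_ge_chord:
  assumes "\<And>z. 0 \<le> w z" "a \<le> b"
  shows "ereal ((INF s\<in>{a..b}. w (g s)) * cmod (g b - g a)) \<le> wlength w g a b"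
proof -
  have "ereal (lower_sum w g (\<lambda>i. if i = 0 then a else b) 1) \<le> wlength w g a b"
    using wlength_upper is_partition_trivial assms by blast
  then show ?thesis by (simp add: lower_sum_def lower_term_def)
qed

lemma lower_sum_Suc: "lower_sum w g t (Suc n) = lower_sum w g t n + lower_term w g t n"
  unfolding lower_sum_def by simp

lemma lower_sum_cong: "(\<And>i. i \<le> n \<Longrightarrow> t i = t' i) \<Longrightarrow> lower_sum w g t n = lower_sum w g t' n"
  unfolding lower_sum_def lower_term_def by (intro sum.cong) auto

lemma lower_term_split:
  fixes p b q :: real
  assumes w: "\<And>z. 0 \<le> w z" and "p \<le> b" "b \<le> q"
  shows "(INF s\<in>{p..q}. w (g s)) * cmod (g q - g p) \<le>
         (INF s\<in>{p..b}. w (g s)) * cmod (g b - g p) + (INF s\<in>{b..q}. w (g s)) * cmod (g q - g b)"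
proof -
  let ?m = "INF s\<in>{p..q}. w (g s)"
  have bdd: "bdd_below ((\<lambda>s. w (g s)) ` {p..q})" using w by (auto intro: bdd_belowI[where m=0])
  have m0: "0 \<le> ?m" using assms by (auto intro!: cINF_greatest)
  have m1: "?m \<le> (INF s\<in>{p..b}. w (g s))"
    using assms bdd by (intro cINF_superset_mono) auto
  have m2: "?m \<le> (INF s\<in>{b..q}. w (g s))"
    using assms bdd by (intro cINF_superset_mono) auto
  have "cmod (g q - g p) \<le> cmod (g b - g p) + cmod (g q - g b)"
    using norm_triangle_ineq[of "g b - g p" "g q - g b"] by simp
  then have "?m * cmod (g q - g p) \<le> ?m * (cmod (g b - g p) + cmod (g q - g b))"
    using m0 by (rule mult_left_mono)
  then have "?m * cmod (g q - g p) \<le> ?m * cmod (g b - g p) + ?m * cmod (g q - g b)"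
    by (simp add: distrib_left)
  also have "\<dots> \<le> (INF s\<in>{p..b}. w (g s)) * cmod (g b - g p) + (INF s\<in>{b..q}. w (g s)) * cmod (g q - g b)"
    by (intro add_mono mult_right_mono m1 m2) auto
  finally show ?thesis .
qed

lemma lower_sum_refine:
  assumes w: "\<And>z. 0 \<le> w z"
  shows "is_partition a c t n \<Longrightarrow> a \<le> b \<Longrightarrow> b \<le> c \<Longrightarrow>
    \<exists>t1 n1 t2 n2. is_partition a b t1 n1 \<and> is_partition b c t2 n2 \<and>
       lower_sum w g t n \<le> lower_sum w g t1 n1 + lower_sum w g t2 n2"
proof (induction n arbitrary: c)
  case 0
  then have "a = c" unfolding is_partition_def by auto
  then have "b = a" "c = a" using 0 by auto
  then show ?case
    by (intro exI[of _ "\<lambda>_. a"] exI[of _ 0]) (auto simp: is_partition_def lower_sum_def)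
next
  case (Suc n)
  let ?c = "t n"
  have Pn: "is_partition a ?c t n" using Suc.prems unfolding is_partition_def by auto
  have cc: "?c \<le> c" using Suc.prems unfolding is_partition_def by auto
  show ?case
  proof (cases "b \<le> ?c")
    case True
    then obtain t1 n1 t2 n2 where P1: "is_partition a b t1 n1" and P2: "is_partition b ?c t2 n2"
      and le: "lower_sum w g t n \<le> lower_sum w g t1 n1 + lower_sum w g t2 n2"
      using Suc.IH[OF Pn] Suc.prems by blast
    define t2' where "t2' = (\<lambda>i. if i \<le> n2 then t2 i else c)"
    have P2': "is_partition b c t2' (Suc n2)"
      unfolding is_partition_def
    proof (intro conjI allI impI)
      fix i assume "i < Suc n2"
      then consider "i < n2" | "i = n2" by linarith
      then show "t2' i \<le> t2' (Suc i)"
        by cases (use P2 cc in \<open>auto simp: t2'_def is_partition_def\<close>)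
    qed (use P2 in \<open>auto simp: t2'_def is_partition_def\<close>)
    have "lower_sum w g t2' (Suc n2) = lower_sum w g t2 n2 + lower_term w g t n"
    proof -
      have "lower_sum w g t2' n2 = lower_sum w g t2 n2" by (rule lower_sum_cong) (auto simp: t2'_def)
      moreover have "lower_term w g t2' n2 = lower_term w g t n"
        using P2 Suc.prems unfolding lower_term_def t2'_def is_partition_def by auto
      ultimately show ?thesis by (simp add: lower_sum_Suc)
    qed
    then have "lower_sum w g t (Suc n) \<le> lower_sum w g t1 n1 + lower_sum w g t2' (Suc n2)"
      using le by (simp add: lower_sum_Suc)
    then show ?thesis using P1 P2' by blast
  next
    case False
    define t1 where "t1 = (\<lambda>i. if i \<le> n then t i else b)"
    define t2 where "t2 = (\<lambda>i::nat. if i = 0 then b else c)"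
    have P1: "is_partition a b t1 (Suc n)"
      unfolding is_partition_def
    proof (intro conjI allI impI)
      fix i assume "i < Suc n"
      then consider "i < n" | "i = n" by linarith
      then show "t1 i \<le> t1 (Suc i)"
        by cases (use Pn False in \<open>auto simp: t1_def is_partition_def\<close>)
    qed (use Pn in \<open>auto simp: t1_def is_partition_def\<close>)
    have P2: "is_partition b c t2 1"
      using Suc.prems unfolding is_partition_def t2_def by auto
    have e1: "lower_sum w g t1 (Suc n) = lower_sum w g t n + (INF s\<in>{t n..b}. w (g s)) * cmod (g b - g (t n))"
    proof -
      have "lower_sum w g t1 n = lower_sum w g t n" by (rule lower_sum_cong) (auto simp: t1_def)
      then show ?thesis by (simp add: lower_sum_Suc lower_term_def t1_def)
    qed
    have e2: "lower_sum w g t2 1 = (INF s\<in>{b..c}. w (g s)) * cmod (g c - g b)"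
      by (simp add: lower_sum_def lower_term_def t2_def)
    have tn: "t (Suc n) = c" using Suc.prems unfolding is_partition_def by auto
    have "lower_term w g t n \<le> (INF s\<in>{t n..b}. w (g s)) * cmod (g b - g (t n)) + (INF s\<in>{b..c}. w (g s)) * cmod (g c - g b)"
      unfolding lower_term_def tn using lower_term_split[of w "t n" b c g, OF w] False Suc.prems by auto
    then have "lower_sum w g t (Suc n) \<le> lower_sum w g t1 (Suc n) + lower_sum w g t2 1"
      using e1 e2 by (simp add: lower_sum_Suc)
    then show ?thesis using P1 P2 by blast
  qed
qed

lemma ereal_SUP_add_le:
  fixes f g :: "'a \<Rightarrow> real" and X :: ereal
  assumes "A \<noteq> {}" "B \<noteq> {}" "\<And>a b. a \<in> A \<Longrightarrow> b \<in> B \<Longrightarrow> ereal (f a) + ereal (g b) \<le> X"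
  shows "(SUP a\<in>A. ereal (f a)) + (SUP b\<in>B. ereal (g b)) \<le> X"
proof -
  obtain b0 where b0: "b0 \<in> B" using assms by auto
  have S2: "(SUP b\<in>B. ereal (g b)) \<noteq> -\<infinity>"
    using SUP_upper[OF b0, of "\<lambda>b. ereal (g b)"] by auto
  have "(SUP a\<in>A. ereal (f a)) + (SUP b\<in>B. ereal (g b)) = (SUP a\<in>A. ereal (f a) + (SUP b\<in>B. ereal (g b)))"
    using SUP_ereal_add_left[OF assms(1) S2] by simp
  also have "\<dots> \<le> X"
  proof (rule SUP_least)
    fix a assume a: "a \<in> A"
    have "ereal (f a) + (SUP b\<in>B. ereal (g b)) = (SUP b\<in>B. ereal (f a) + ereal (g b))"
      by (rule SUP_ereal_add_right[symmetric]) (use assms(2) in auto)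
    also have "\<dots> \<le> X" using a assms(3) by (auto intro: SUP_least)
    finally show "ereal (f a) + (SUP b\<in>B. ereal (g b)) \<le> X" .
  qed
  finally show ?thesis .
qed

lemma wlength_subadditive:
  assumes w: "\<And>z. 0 \<le> w z" and "a \<le> b" "b \<le> c"
  shows "wlength w g a c \<le> wlength w g a b + wlength w g b c"
  unfolding wlength_def[of w g a c]
proof (rule SUP_least)
  fix p assume "p \<in> {(t, n). is_partition a c t n}"
  then obtain t n where p: "p = (t, n)" "is_partition a c t n" by auto
  then obtain t1 n1 t2 n2 where "is_partition a b t1 n1" "is_partition b c t2 n2"
       "lower_sum w g t n \<le> lower_sum w g t1 n1 + lower_sum w g t2 n2"
    using lower_sum_refine[of w, OF w] assms by blast
  then have "ereal (lower_sum w g t n) \<le> ereal (lower_sum w g t1 n1) + ereal (lower_sum w g t2 n2)" by simp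
  also have "\<dots> \<le> wlength w g a b + wlength w g b c"
    by (intro add_mono wlength_upper) fact+
  finally show "ereal (lower_sum w g (fst p) (snd p)) \<le> wlength w g a b + wlength w g b c" using p by simp
qed

definition partition_append :: "(nat \<Rightarrow> real) \<Rightarrow> nat \<Rightarrow> (nat \<Rightarrow> real) \<Rightarrow> nat \<Rightarrow> real" where
  "partition_append t1 n1 t2 = (\<lambda>i. if i \<le> n1 then t1 i else t2 (i - n1))"

lemma lower_sum_partition_append:
  assumes "t1 n1 = t2 0"
  shows "lower_sum w g (partition_append t1 n1 t2) (n1 + n2) = lower_sum w g t1 n1 + lower_sum w g t2 n2"
proof (induction n2)
  case 0
  show ?case by (simp add: lower_sum_def) (rule lower_sum_cong[unfolded lower_sum_def], simp add: partition_append_def)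
next
  case (Suc n2)
  have "lower_term w g (partition_append t1 n1 t2) (n1 + n2) = lower_term w g t2 n2"
    using assms unfolding lower_term_def partition_append_def by (cases n2) (auto simp: Suc_diff_le)
  then show ?case using Suc by (simp add: lower_sum_Suc)
qed

lemma is_partition_append:
  assumes "is_partition a b t1 n1" "is_partition b c t2 n2"
  shows "is_partition a c (partition_append t1 n1 t2) (n1 + n2)"
  unfolding is_partition_def
proof (intro conjI allI impI)
  fix i assume i: "i < n1 + n2"
  consider "i < n1" | "i = n1" | "i > n1" by linarith
  then show "partition_append t1 n1 t2 i \<le> partition_append t1 n1 t2 (Suc i)"
  proof cases
    case 1 then show ?thesis using assms by (auto simp: partition_append_def is_partition_def)
  next
    case 2
    then have "n2 > 0" using i by auto
    then show ?thesis using assms 2 by (auto simp: partition_append_def is_partition_def)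
  next
    case 3
    then have "i - n1 < n2" "Suc i - n1 = Suc (i - n1)" using i by auto
    then show ?thesis using assms 3 by (auto simp: partition_append_def is_partition_def)
  qed
qed (use assms in \<open>auto simp: partition_append_def is_partition_def\<close>)

lemma wlength_superadditive:
  assumes w: "\<And>z. 0 \<le> w z" and "a \<le> b" "b \<le> c"
  shows "wlength w g a b + wlength w g b c \<le> wlength w g a c"
  unfolding wlength_def[of w g a b] wlength_def[of w g b c]
proof (rule ereal_SUP_add_le)
  show "{(t, n). is_partition a b t n} \<noteq> {}" using is_partition_trivial[OF assms(2)] by auto
  show "{(t, n). is_partition b c t n} \<noteq> {}" using is_partition_trivial[OF assms(3)] by auto
  fix p1 p2 assume "p1 \<in> {(t, n). is_partition a b t n}" "p2 \<in> {(t, n). is_partition b c t n}"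
  then obtain t1 n1 t2 n2 where p: "p1 = (t1, n1)" "p2 = (t2, n2)"
    "is_partition a b t1 n1" "is_partition b c t2 n2" by auto
  then have "t1 n1 = t2 0" unfolding is_partition_def by auto
  then have "ereal (lower_sum w g t1 n1) + ereal (lower_sum w g t2 n2) = ereal (lower_sum w g (partition_append t1 n1 t2) (n1 + n2))"
    using lower_sum_partition_append by simp
  also have "\<dots> \<le> wlength w g a c" by (rule wlength_upper, rule is_partition_append) (use p in auto)
  finally show "ereal (lower_sum w g (fst p1) (snd p1)) + ereal (lower_sum w g (fst p2) (snd p2)) \<le> wlength w g a c"
    using p by simp
qed

lemma wlength_const_le:
  assumes "\<And>x. a \<le> x \<Longrightarrow> x \<le> b \<Longrightarrow> g x = z"
  shows "wlength w g a b \<le> 0"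
proof (rule wlength_least)
  fix t n assume P: "is_partition a b t n"
  have "lower_sum w g t n = 0" unfolding lower_sum_def lower_term_def
    using partition_range[OF P] assms by (intro sum.neutral) auto
  then show "ereal (lower_sum w g t n) \<le> 0" by simp
qed

lemma wlength_additive:
  assumes w: "\<And>z. 0 \<le> w z" and "a \<le> b" "b \<le> c"
  shows "wlength w g a c = wlength w g a b + wlength w g b c"
  using wlength_subadditive[OF assms] wlength_superadditive[OF assms] by (rule antisym)

lemma wlength_mono_interval:
  assumes w: "\<And>z. 0 \<le> w z" and "a \<le> x" "x \<le> y" "y \<le> b"
  shows "wlength w g x y \<le> wlength w g a b"
proof -
  have ax: "0 \<le> wlength w g a x" and yb: "0 \<le> wlength w g y b"
    by (rule wlength_nonneg[of w, OF w], use assms in auto)+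
  have "wlength w g x y \<le> wlength w g a x + wlength w g x y"
    by (rule add_increasing[OF ax order_refl])
  also have "\<dots> \<le> wlength w g a y"
    by (rule wlength_superadditive[of w, OF w]) (use assms in auto)
  also have "\<dots> \<le> wlength w g a y + wlength w g y b"
    by (rule add_increasing2[OF yb order_refl])
  also have "\<dots> \<le> wlength w g a b"
    by (rule wlength_superadditive[of w, OF w]) (use assms in auto)
  finally show ?thesis .
qed

lemma wlength_chain:
  assumes w: "\<And>z. 0 \<le> w z" and p: "\<And>k. p k \<le> p (Suc k)" and "i \<le> j"
  shows "wlength w g (p i) (p j) = (\<Sum>k\<in>{i..<j}. wlength w g (p k) (p (Suc k)))"
  using \<open>i \<le> j\<close>
proof (induction j rule: dec_induct)
  case base
  have "wlength w g (p i) (p i) \<le> 0" by (rule wlength_const_le) auto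
  moreover have "0 \<le> wlength w g (p i) (p i)" using wlength_nonneg[of w "p i" "p i" g] w by simp
  ultimately have "wlength w g (p i) (p i) = 0" by (rule antisym)
  then show ?case by simp
next
  case (step j)
  have "p i \<le> p j" using lift_Suc_mono_le[of p, OF p] step.hyps(1) .
  then have "wlength w g (p i) (p (Suc j)) = wlength w g (p i) (p j) + wlength w g (p j) (p (Suc j))"
    using w p by (intro wlength_additive) auto
  also have "\<dots> = (\<Sum>k\<in>{i..<Suc j}. wlength w g (p k) (p (Suc k)))"
    using step.IH step.hyps(1) by simp
  finally show ?case .
qed

lemma wlength_cong:
  assumes "\<And>x. a \<le> x \<Longrightarrow> x \<le> b \<Longrightarrow> g x = h x"
  shows "wlength w g a b = wlength w h a b"
  unfolding wlength_def
proof (rule SUP_cong)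
  fix p assume "p \<in> {(t, n). is_partition a b t n}"
  then obtain t n where p: "p = (t, n)" "is_partition a b t n" by auto
  have "lower_term w g t i = lower_term w h t i" if "i < n" for i
  proof -
    have r: "a \<le> t i" "t i \<le> b" "a \<le> t (Suc i)" "t (Suc i) \<le> b"
      using partition_range[OF p(2), of i] partition_range[OF p(2), of "Suc i"] that by auto
    have "(INF s\<in>{t i..t (Suc i)}. w (g s)) = (INF s\<in>{t i..t (Suc i)}. w (h s))"
      using r assms by (intro INF_cong) auto
    then show ?thesis unfolding lower_term_def using r assms by simp
  qed
  then show "ereal (lower_sum w g (fst p) (snd p)) = ereal (lower_sum w h (fst p) (snd p))"
    using p unfolding lower_sum_def by simp
qed simp

lemma wlength_affine_le:
  assumes "c > 0"
  shows "wlength w (\<lambda>x. g (c * x + d)) a b \<le> wlength w g (c * a + d) (c * b + d)"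
proof (rule wlength_least)
  fix t n assume P: "is_partition a b t n"
  define t' where "t' = (\<lambda>i. c * t i + d)"
  have P': "is_partition (c * a + d) (c * b + d) t' n"
    using P assms unfolding is_partition_def t'_def by auto
  have "lower_sum w (\<lambda>x. g (c * x + d)) t n = lower_sum w g t' n"
    unfolding lower_sum_def lower_term_def
  proof (rule sum.cong)
    fix i assume "i \<in> {..<n}"
    then have le: "t i \<le> t (Suc i)" using P unfolding is_partition_def by auto
    have im: "(\<lambda>x. c * x + d) ` {t i..t (Suc i)} = {t' i..t' (Suc i)}"
      using le assms unfolding t'_def by (subst image_affinity_atLeastAtMost) auto
    have "(INF s\<in>{t i..t (Suc i)}. w (g (c * s + d))) = (INF s\<in>{t' i..t' (Suc i)}. w (g s))"
      unfolding im[symmetric] by (simp add: image_comp o_def)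
    then show "(INF s\<in>{t i..t (Suc i)}. w (g (c * s + d))) * cmod (g (c * t (Suc i) + d) - g (c * t i + d)) =
         (INF s\<in>{t' i..t' (Suc i)}. w (g s)) * cmod (g (t' (Suc i)) - g (t' i))"
      by (simp add: t'_def)
  qed simp
  then show "ereal (lower_sum w (\<lambda>x. g (c * x + d)) t n) \<le> wlength w g (c * a + d) (c * b + d)"
    using wlength_upper[OF P'] by simp
qed

lemma wlength_reflect_le:
  "wlength w (\<lambda>x. g (e - x)) a b \<le> wlength w g (e - b) (e - a)"
proof (rule wlength_least)
  fix t n assume P: "is_partition a b t n"
  define t' where "t' = (\<lambda>i. e - t (n - i))"
  have P': "is_partition (e - b) (e - a) t' n"
    unfolding is_partition_def
  proof (intro conjI allI impI)
    fix i assume i: "i < n"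
    then have "n - i = Suc (n - Suc i)" by auto
    then show "t' i \<le> t' (Suc i)" using P i unfolding t'_def is_partition_def by auto
  qed (use P in \<open>auto simp: t'_def is_partition_def\<close>)
  have "lower_sum w (\<lambda>x. g (e - x)) t n = (\<Sum>i<n. lower_term w (\<lambda>x. g (e - x)) t (n - Suc i))"
    unfolding lower_sum_def by (rule sum.nat_diff_reindex[symmetric])
  also have "\<dots> = lower_sum w g t' n"
    unfolding lower_sum_def
  proof (rule sum.cong)
    fix i assume "i \<in> {..<n}"
    then have i: "i < n" by auto
    then have ni: "n - i = Suc (n - Suc i)" by auto
    let ?j = "n - Suc i"
    have le: "t ?j \<le> t (Suc ?j)" using P i unfolding is_partition_def by auto
    have t'i: "t' i = e - t (Suc ?j)" "t' (Suc i) = e - t ?j" using ni unfolding t'_def by auto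
    have fe: "(\<lambda>x. e - x) = (\<lambda>x. (-1) * x + e)" by (auto simp: fun_eq_iff)
    have im: "(\<lambda>x. e - x) ` {t ?j..t (Suc ?j)} = {t' i..t' (Suc i)}"
      using le unfolding t'i fe by (subst image_affinity_atLeastAtMost) auto
    have "(INF s\<in>{t ?j..t (Suc ?j)}. w (g (e - s))) = (INF x\<in>(\<lambda>x. e - x) ` {t ?j..t (Suc ?j)}. w (g x))"
      by (simp only: image_comp o_def)
    also have "\<dots> = (INF s\<in>{t' i..t' (Suc i)}. w (g s))" by (simp only: im)
    finally have "(INF s\<in>{t ?j..t (Suc ?j)}. w (g (e - s))) = (INF s\<in>{t' i..t' (Suc i)}. w (g s))" .
    then show "lower_term w (\<lambda>x. g (e - x)) t ?j = lower_term w g t' i"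
      unfolding lower_term_def t'i by (simp add: norm_minus_commute)
  qed simp
  finally show "ereal (lower_sum w (\<lambda>x. g (e - x)) t n) \<le> wlength w g (e - b) (e - a)"
    using wlength_upper[OF P'] by simp
qed

lemma wlength_weight_le:
  assumes w1: "\<And>z. 0 \<le> w1 z" and w2: "\<And>z. 0 \<le> w2 z" and c: "0 \<le> c"
    and le: "\<And>s. a \<le> s \<Longrightarrow> s \<le> b \<Longrightarrow> w1 (g s) \<le> c * w2 (g s)"
  shows "wlength w1 g a b \<le> ereal c * wlength w2 g a b"
proof (rule wlength_least)
  fix t n assume P: "is_partition a b t n"
  have "lower_term w1 g t i \<le> c * lower_term w2 g t i" if i: "i < n" for i
  proof -
    have r: "a \<le> t i" "t (Suc i) \<le> b" "t i \<le> t (Suc i)"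
      using partition_range[OF P, of i] partition_range[OF P, of "Suc i"] P i
      unfolding is_partition_def by auto
    have bdd1: "bdd_below ((\<lambda>s. w1 (g s)) ` {t i..t (Suc i)})" using w1 by (auto intro: bdd_belowI[where m=0])
    have "(INF s\<in>{t i..t (Suc i)}. w1 (g s)) \<le> c * (INF s\<in>{t i..t (Suc i)}. w2 (g s))"
    proof (cases "c = 0")
      case True
      have "(INF s\<in>{t i..t (Suc i)}. w1 (g s)) \<le> w1 (g (t i))"
        using r bdd1 by (intro cINF_lower) auto
      also have "\<dots> \<le> 0" using le[of "t i"] r True by auto
      finally show ?thesis using True by simp
    next
      case False
      then have cp: "c > 0" using c by auto
      have "(INF s\<in>{t i..t (Suc i)}. w1 (g s)) / c \<le> (INF s\<in>{t i..t (Suc i)}. w2 (g s))"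
      proof (rule cINF_greatest)
        show "{t i..t (Suc i)} \<noteq> {}" using r by auto
        fix s assume s: "s \<in> {t i..t (Suc i)}"
        have "(INF s\<in>{t i..t (Suc i)}. w1 (g s)) \<le> w1 (g s)"
          using s bdd1 by (intro cINF_lower) auto
        also have "\<dots> \<le> c * w2 (g s)" using le[of s] s r by auto
        finally show "(INF s\<in>{t i..t (Suc i)}. w1 (g s)) / c \<le> w2 (g s)"
          using cp by (simp add: divide_le_eq mult.commute)
      qed
      then show ?thesis using cp by (simp add: divide_le_eq mult.commute)
    qed
    then show ?thesis unfolding lower_term_def
      by (metis (no_types, lifting) mult.assoc mult_right_mono norm_ge_zero)
  qed
  then have "lower_sum w1 g t n \<le> c * lower_sum w2 g t n"
    unfolding lower_sum_def sum_distrib_left by (intro sum_mono) auto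
  then have "ereal (lower_sum w1 g t n) \<le> ereal c * ereal (lower_sum w2 g t n)" by simp
  also have "\<dots> \<le> ereal c * wlength w2 g a b"
    using wlength_upper[OF P] c by (intro ereal_mult_left_mono) auto
  finally show "ereal (lower_sum w1 g t n) \<le> ereal c * wlength w2 g a b" .
qed

lemma wlength_linear_le:
  assumes w: "\<And>z. 0 \<le> w z" and M: "\<And>s. a \<le> s \<Longrightarrow> s \<le> b \<Longrightarrow> w (g s) \<le> W"
    and lin: "\<And>u v. a \<le> u \<Longrightarrow> u \<le> v \<Longrightarrow> v \<le> b \<Longrightarrow> cmod (g v - g u) = (v - u) * K"
  shows "wlength w g a b \<le> ereal (W * ((b - a) * K))"
proof (rule wlength_least)
  fix t n assume P: "is_partition a b t n"
  have "lower_term w g t i \<le> W * ((t (Suc i) - t i) * K)" if i: "i < n" for i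
  proof -
    have r: "a \<le> t i" "t (Suc i) \<le> b" "t i \<le> t (Suc i)"
      using partition_range[OF P, of i] partition_range[OF P, of "Suc i"] P i
      unfolding is_partition_def by auto
    have bdd1: "bdd_below ((\<lambda>s. w (g s)) ` {t i..t (Suc i)})" using w by (auto intro: bdd_belowI[where m=0])
    have "(INF s\<in>{t i..t (Suc i)}. w (g s)) \<le> w (g (t i))"
      using r bdd1 by (intro cINF_lower) auto
    also have "\<dots> \<le> W" using M r by auto
    finally show ?thesis unfolding lower_term_def using lin[of "t i" "t (Suc i)"] r
      by (metis mult_right_mono norm_ge_zero)
  qed
  then have "lower_sum w g t n \<le> (\<Sum>i<n. W * ((t (Suc i) - t i) * K))"
    unfolding lower_sum_def by (intro sum_mono) auto
  also have "\<dots> = W * ((t n - t 0) * K)"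
    by (simp add: sum_distrib_left[symmetric] sum_distrib_right[symmetric] sum_lessThan_telescope)
  finally show "ereal (lower_sum w g t n) \<le> ereal (W * ((b - a) * K))"
    using P unfolding is_partition_def by simp
qed

section \<open>Quasihyperbolic distance\<close>

definition qh_paths :: "complex set \<Rightarrow> complex \<Rightarrow> complex \<Rightarrow> (real \<Rightarrow> complex) set" where
  "qh_paths D x y = {g. path g \<and> path_image g \<subseteq> D \<and> pathstart g = x \<and> pathfinish g = y
                  \<and> curve_length g 0 1 < \<infinity>}"

text \<open>Keeping the value \<open>\<infinity>\<close> for points joined by no admissible path makes the triangle
  inequality hold without side conditions.\<close>

definition eqhdist :: "complex set \<Rightarrow> complex \<Rightarrow> complex \<Rightarrow> ereal" where
  "eqhdist D x y = (INF g \<in> qh_paths D x y. qh_length D g 0 1)"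

lemma qhdist_eq_real_of_eqhdist: "qhdist D x y = real_of_ereal (eqhdist D x y)"
  by (simp add: qhdist_def eqhdist_def qh_paths_def)

lemma bdist_nonneg: "0 \<le> bdist D z" by (simp add: bdist_def infdist_nonneg)

lemma inverse_bdist_nonneg: "0 \<le> 1 / bdist D z" using bdist_nonneg by simp

lemma bdist_pos: "open D \<Longrightarrow> D \<noteq> UNIV \<Longrightarrow> z \<in> D \<Longrightarrow> 0 < bdist D z"
  unfolding bdist_def by (rule infdist_pos_not_in_closed) auto

lemma bdist_lipschitz_dist: "bdist D x \<le> bdist D y + dist x y"
  unfolding bdist_def by (rule infdist_triangle)

lemma bdist_lipschitz: "bdist D x \<le> bdist D y + cmod (x - y)"
  using bdist_lipschitz_dist[of D x y] by (simp add: dist_norm)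

lemma mem_of_dist_lt_bdist: "dist x y < bdist D x \<Longrightarrow> y \<in> D"
  unfolding bdist_def using infdist_le[of y "-D" x] by (cases "y \<in> D") auto

lemma qh_length_nonneg: "a \<le> b \<Longrightarrow> 0 \<le> qh_length D g a b"
  unfolding qh_length_eq_wlength by (rule wlength_nonneg) (auto simp: bdist_nonneg)

lemma curve_length_nonneg: "a \<le> b \<Longrightarrow> 0 \<le> curve_length g a b"
  unfolding curve_length_eq_wlength by (rule wlength_nonneg) auto

lemma qh_length_subarc_finite:
  assumes "qh_length D g a b < \<infinity>" "a \<le> x" "x \<le> y" "y \<le> b"
  shows "qh_length D g x y < \<infinity>"
proof -
  have "qh_length D g x y \<le> qh_length D g a b"
    unfolding qh_length_eq_wlength by (rule wlength_mono_interval) (use assms in \<open>auto simp: bdist_nonneg\<close>)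
  then show ?thesis using assms(1) by (rule le_less_trans)
qed

lemma qh_length_subarc_real:
  assumes "qh_length D g a b < \<infinity>" "a \<le> x" "x \<le> y" "y \<le> b"
  shows "qh_length D g x y = ereal (real_of_ereal (qh_length D g x y))"
    and "0 \<le> real_of_ereal (qh_length D g x y)"
  using qh_length_subarc_finite[OF assms] qh_length_nonneg[of x y D g] assms
  by (cases "qh_length D g x y"; auto)+

lemma eqhdist_nonneg: "0 \<le> eqhdist D x y"
  unfolding eqhdist_def by (rule INF_greatest) (auto intro: qh_length_nonneg)

lemma eqhdist_le_qh_length: "g \<in> qh_paths D x y \<Longrightarrow> eqhdist D x y \<le> qh_length D g 0 1"
  unfolding eqhdist_def by (rule INF_lower)

lemma eqhdist_eq_qhdist_finite: "eqhdist D x y < \<infinity> \<Longrightarrow> eqhdist D x y = ereal (qhdist D x y)"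
  using eqhdist_nonneg[of D x y] unfolding qhdist_eq_real_of_eqhdist by (cases "eqhdist D x y") auto

lemma qhdist_nonneg: "0 \<le> qhdist D x y"
  unfolding qhdist_eq_real_of_eqhdist using eqhdist_nonneg by (simp add: real_of_ereal_pos)

lemma qhdist_le_eqhdist: "ereal (qhdist D x y) \<le> eqhdist D x y"
  using eqhdist_nonneg[of D x y] unfolding qhdist_eq_real_of_eqhdist by (cases "eqhdist D x y") auto

lemma curve_length_le_qh_length:
  assumes "open D" "D \<noteq> UNIV" "0 \<le> K"
    and "\<And>s. a \<le> s \<Longrightarrow> s \<le> b \<Longrightarrow> g s \<in> D \<and> bdist D (g s) \<le> K"
  shows "curve_length g a b \<le> ereal K * qh_length D g a b"
  unfolding curve_length_eq_wlength qh_length_eq_wlength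
proof (rule wlength_weight_le)
  fix s assume "a \<le> s" "s \<le> b"
  with assms bdist_pos[of D "g s"] show "1 \<le> K * (1 / bdist D (g s))"
    by (auto simp: field_simps)
qed (use assms inverse_bdist_nonneg in auto)

lemma eqhdist_le_qh_length_arc:
  assumes D: "open D" "D \<noteq> UNIV" and ab: "a \<le> b" and g: "continuous_on {a..b} g" "g ` {a..b} \<subseteq> D"
    and fin: "qh_length D g a b < \<infinity>"
  shows "eqhdist D (g a) (g b) \<le> qh_length D g a b"
proof (cases "a = b")
  case True
  let ?h = "\<lambda>_::real. g a"
  have "?h \<in> qh_paths D (g a) (g b)"
    unfolding qh_paths_def path_def pathstart_def pathfinish_def path_image_def curve_length_eq_wlength
    using True g wlength_const_le[of 0 1 "\<lambda>_. g a" "g a" "\<lambda>z. 1"] by auto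
  then have "eqhdist D (g a) (g b) \<le> qh_length D ?h 0 1" by (rule eqhdist_le_qh_length)
  also have "\<dots> \<le> 0" unfolding qh_length_eq_wlength by (rule wlength_const_le) auto
  also have "\<dots> \<le> qh_length D g a b" using qh_length_nonneg[OF ab] .
  finally show ?thesis .
next
  case False
  then have c: "b - a > 0" using ab by auto
  let ?h = "\<lambda>u. g ((b - a) * u + a)"
  have im: "(\<lambda>u. (b - a) * u + a) ` {0..1} = {a..b}"
    using c by (subst image_affinity_atLeastAtMost) auto
  have hc: "continuous_on {0..1} ?h"
    by (rule continuous_on_compose2[OF g(1)]) (auto intro!: continuous_intros simp: im[symmetric])
  have hi: "?h ` {0..1} \<subseteq> D" using g(2) im by auto
  have qle: "qh_length D ?h 0 1 \<le> qh_length D g a b"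
    using wlength_affine_le[OF c, of "\<lambda>z. 1 / bdist D z" g a 0 1] unfolding qh_length_eq_wlength by simp
  have "compact ((\<lambda>s. bdist D (?h s)) ` {0..1})"
    unfolding bdist_def by (intro compact_continuous_image continuous_on_infdist hc) auto
  then obtain M where "\<forall>x\<in>(\<lambda>s. bdist D (?h s)) ` {0..1}. \<bar>x\<bar> \<le> M"
    using compact_imp_bounded bounded_real by blast
  then have Mb: "\<And>s. s \<in> {0..1} \<Longrightarrow> bdist D (?h s) \<le> M" using abs_le_D1 by blast
  then have M0: "M \<ge> 0" using bdist_nonneg[of D "?h 0"] by force
  have M: "curve_length ?h 0 1 \<le> ereal M * qh_length D ?h 0 1"
    by (rule curve_length_le_qh_length[OF D M0]) (use hi Mb in auto)
  have "qh_length D ?h 0 1 < \<infinity>" using qle fin by auto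
  then have "curve_length ?h 0 1 < \<infinity>" using M M0 qh_length_nonneg[of 0 1 D ?h]
    by (cases "qh_length D ?h 0 1") (auto simp: le_less_trans)
  then have "?h \<in> qh_paths D (g a) (g b)"
    unfolding qh_paths_def path_def pathstart_def pathfinish_def path_image_def using hc hi by auto
  then show ?thesis using eqhdist_le_qh_length qle order_trans by blast
qed

lemma reversepath_eq: "reversepath g = (\<lambda>x. g (1 - x))"
  by (simp add: reversepath_def fun_eq_iff)

lemma eqhdist_sym_le: "eqhdist D y x \<le> eqhdist D x y"
  unfolding eqhdist_def[of D x y]
proof (rule INF_greatest)
  fix g assume g: "g \<in> qh_paths D x y"
  have r: "reversepath g \<in> qh_paths D y x"
  proof -
    have "curve_length (reversepath g) 0 1 \<le> curve_length g 0 1"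
      unfolding reversepath_eq curve_length_eq_wlength using wlength_reflect_le[of "\<lambda>z. 1" g 1 0 1] by simp
    then show ?thesis using g unfolding qh_paths_def by auto
  qed
  have "qh_length D (reversepath g) 0 1 \<le> qh_length D g 0 1"
    unfolding reversepath_eq qh_length_eq_wlength using wlength_reflect_le[of _ g 1 0 1] by simp
  then show "eqhdist D y x \<le> qh_length D g 0 1" using eqhdist_le_qh_length[OF r] by auto
qed

lemma eqhdist_sym: "eqhdist D y x = eqhdist D x y"
  using eqhdist_sym_le by (metis antisym)

lemma qhdist_sym: "qhdist D y x = qhdist D x y"
  unfolding qhdist_eq_real_of_eqhdist using eqhdist_sym by metis

lemma wlength_join_le:
  assumes w: "\<And>z. 0 \<le> w z" and e: "pathfinish g1 = pathstart g2"
  shows "wlength w (g1 +++ g2) 0 1 \<le> wlength w g1 0 1 + wlength w g2 0 1"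
proof -
  have "wlength w (g1 +++ g2) 0 1 \<le> wlength w (g1 +++ g2) 0 (1/2) + wlength w (g1 +++ g2) (1/2) 1"
    by (rule wlength_subadditive[of w, OF w]) auto
  also have "wlength w (g1 +++ g2) 0 (1/2) \<le> wlength w g1 0 1"
  proof -
    have "wlength w (g1 +++ g2) 0 (1/2) = wlength w (\<lambda>x. g1 (2 * x + 0)) 0 (1/2)"
      by (rule wlength_cong) (auto simp: joinpaths_def)
    also have "\<dots> \<le> wlength w g1 (2 * 0 + 0) (2 * (1/2) + 0)" by (rule wlength_affine_le) auto
    finally show ?thesis by simp
  qed
  also have "wlength w (g1 +++ g2) (1/2) 1 \<le> wlength w g2 0 1"
  proof -
    have "wlength w (g1 +++ g2) (1/2) 1 = wlength w (\<lambda>x. g2 (2 * x + (-1))) (1/2) 1"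
    proof (rule wlength_cong)
      fix x :: real assume x: "1/2 \<le> x" "x \<le> 1"
      show "(g1 +++ g2) x = g2 (2 * x + (-1))"
      proof (cases "x = 1/2")
        case True then show ?thesis unfolding True using e by (simp add: joinpaths_def pathfinish_def pathstart_def)
      next
        case False then show ?thesis using x by (simp add: joinpaths_def)
      qed
    qed
    also have "\<dots> \<le> wlength w g2 (2 * (1/2) + (-1)) (2 * 1 + (-1))" by (rule wlength_affine_le) auto
    finally show ?thesis by simp
  qed
  finally show ?thesis by (simp add: add_mono)
qed

lemma eqhdist_triangle: "eqhdist D x z \<le> eqhdist D x y + eqhdist D y z"
proof (cases "eqhdist D x y = \<infinity> \<or> eqhdist D y z = \<infinity>")
  case True
  then show ?thesis using eqhdist_nonneg[of D x y] eqhdist_nonneg[of D y z] by auto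
next
  case False
  then have f1: "eqhdist D x y < \<infinity>" and f2: "eqhdist D y z < \<infinity>" by (auto simp: less_top)
  show ?thesis
  proof (rule ereal_le_epsilon2)
    fix e :: real assume e: "0 < e"
    have "eqhdist D x y < eqhdist D x y + ereal (e/2)" using f1 e eqhdist_nonneg[of D x y]
      by (cases "eqhdist D x y") auto
    then obtain g1 where g1: "g1 \<in> qh_paths D x y" "qh_length D g1 0 1 < eqhdist D x y + ereal (e/2)"
      unfolding eqhdist_def[of D x y] by (auto simp: INF_less_iff)
    have "eqhdist D y z < eqhdist D y z + ereal (e/2)" using f2 e eqhdist_nonneg[of D y z]
      by (cases "eqhdist D y z") auto
    then obtain g2 where g2: "g2 \<in> qh_paths D y z" "qh_length D g2 0 1 < eqhdist D y z + ereal (e/2)"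
      unfolding eqhdist_def[of D y z] by (auto simp: INF_less_iff)
    have e12: "pathfinish g1 = pathstart g2" using g1 g2 unfolding qh_paths_def by auto
    have "curve_length (g1 +++ g2) 0 1 \<le> curve_length g1 0 1 + curve_length g2 0 1"
      unfolding curve_length_eq_wlength by (rule wlength_join_le[OF _ e12]) auto
    moreover have "curve_length g1 0 1 < \<infinity>" "curve_length g2 0 1 < \<infinity>"
      using g1 g2 unfolding qh_paths_def by auto
    ultimately have "curve_length (g1 +++ g2) 0 1 < \<infinity>"
      using curve_length_nonneg[of 0 1 g1] curve_length_nonneg[of 0 1 g2]
      by (cases "curve_length g1 0 1"; cases "curve_length g2 0 1") auto
    then have j: "g1 +++ g2 \<in> qh_paths D x z"
      using g1 g2 e12 path_image_join_subset[of g1 g2] unfolding qh_paths_def by auto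
    have "eqhdist D x z \<le> qh_length D (g1 +++ g2) 0 1" by (rule eqhdist_le_qh_length[OF j])
    also have "\<dots> \<le> qh_length D g1 0 1 + qh_length D g2 0 1"
      unfolding qh_length_eq_wlength by (rule wlength_join_le[OF _ e12]) (simp add: bdist_nonneg)
    also have "\<dots> \<le> (eqhdist D x y + ereal (e/2)) + (eqhdist D y z + ereal (e/2))"
      using g1 g2 by (intro add_mono) auto
    also have "\<dots> = eqhdist D x y + eqhdist D y z + ereal e"
      using f1 f2 eqhdist_nonneg[of D x y] eqhdist_nonneg[of D y z]
      by (cases "eqhdist D x y"; cases "eqhdist D y z") auto
    finally show "eqhdist D x z \<le> eqhdist D x y + eqhdist D y z + ereal e" .
  qed
qed

lemma linepath_eq: "linepath y z s = y + complex_of_real s * (z - y)"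
  unfolding linepath_def scaleR_conv_of_real by (simp add: algebra_simps)

lemma eqhdist_segment_le:
  assumes D: "open D" "D \<noteq> UNIV" "y \<in> D" and yz: "cmod (z - y) \<le> bdist D y / 2"
  shows "eqhdist D y z \<le> ereal (2 / bdist D y * cmod (z - y))"
proof -
  let ?d = "bdist D y"
  let ?l = "linepath y z"
  have dp: "0 < ?d" using bdist_pos D by auto
  have ls: "cmod (?l s - y) = s * cmod (z - y)" if "0 \<le> s" for s
    using that by (simp add: linepath_eq norm_mult)
  have inD: "?l s \<in> D" and dl: "?d / 2 \<le> bdist D (?l s)" if "0 \<le> s" "s \<le> 1" for s
  proof -
    have "s * cmod (z - y) \<le> cmod (z - y)" using that by (simp add: mult_left_le_one_le)
    then have c: "cmod (?l s - y) \<le> ?d / 2" using ls[of s] that yz by linarith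
    then have "dist y (?l s) < ?d" using dp by (simp add: dist_norm norm_minus_commute)
    then show "?l s \<in> D" by (rule mem_of_dist_lt_bdist)
    have "?d \<le> bdist D (?l s) + cmod (y - ?l s)" by (rule bdist_lipschitz)
    then show "?d / 2 \<le> bdist D (?l s)" using c by (simp add: norm_minus_commute)
  qed
  have lin: "cmod (?l v - ?l u) = (v - u) * cmod (z - y)" if "u \<le> v" for u v
  proof -
    have "?l v - ?l u = complex_of_real (v - u) * (z - y)" by (simp add: linepath_eq algebra_simps)
    then have "cmod (?l v - ?l u) = \<bar>v - u\<bar> * cmod (z - y)" by (simp only: norm_mult norm_of_real)
    then show ?thesis using that by simp
  qed
  have cl: "curve_length ?l 0 1 \<le> ereal (1 * ((1 - 0) * cmod (z - y)))"
    unfolding curve_length_eq_wlength by (rule wlength_linear_le) (auto simp: lin)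
  have qh_paths: "?l \<in> qh_paths D y z"
    unfolding qh_paths_def using cl inD by (auto simp: path_image_def le_less_trans)
  have "qh_length D ?l 0 1 \<le> ereal (2 / ?d * ((1 - 0) * cmod (z - y)))"
    unfolding qh_length_eq_wlength
  proof (rule wlength_linear_le)
    fix s :: real assume s: "0 \<le> s" "s \<le> 1"
    have "0 < bdist D (?l s)" using dl[OF s] dp by linarith
    then show "1 / bdist D (?l s) \<le> 2 / ?d" using dl[OF s] dp by (simp add: field_simps)
  qed (auto simp: lin bdist_nonneg)
  then show ?thesis using eqhdist_le_qh_length[OF qh_paths] by auto
qed

lemma eqhdist_half_ball_le_one:
  assumes D: "open D" "D \<noteq> UNIV" and w: "w \<in> D" "w' \<in> ball w (bdist D w / 2)"
  shows "eqhdist D w w' \<le> 1" "w' \<in> D"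
proof -
  have dp: "0 < bdist D w" using bdist_pos D w by auto
  have c: "cmod (w' - w) \<le> bdist D w / 2" using w by (simp add: dist_norm norm_minus_commute)
  have "eqhdist D w w' \<le> ereal (2 / bdist D w * cmod (w' - w))"
    by (rule eqhdist_segment_le) (use D w c in auto)
  also have "2 / bdist D w * cmod (w' - w) \<le> 1" using c dp by (simp add: field_simps)
  finally show "eqhdist D w w' \<le> 1" by (simp add: one_ereal_def)
  show "w' \<in> D" using w dp by (intro mem_of_dist_lt_bdist[of w]) auto
qed

lemma eqhdist_refl_le: "open D \<Longrightarrow> D \<noteq> UNIV \<Longrightarrow> y \<in> D \<Longrightarrow> eqhdist D y y \<le> 0"
  using eqhdist_segment_le[of D y y] bdist_pos[of D y] by (simp add: zero_ereal_def)

lemma eqhdist_finite: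
  assumes D: "open D" "D \<noteq> UNIV" "connected D" and xy: "x \<in> D" "y \<in> D"
  shows "eqhdist D x y < \<infinity>"
proof -
  define U where "U = {w\<in>D. eqhdist D x w < \<infinity>}"
  define V where "V = {w\<in>D. eqhdist D x w = \<infinity>}"
  note near = eqhdist_half_ball_le_one[OF D(1,2)]
  have "open U"
  proof (rule openI)
    fix w assume w: "w \<in> U"
    have "ball w (bdist D w / 2) \<subseteq> U"
    proof
      fix w' assume w': "w' \<in> ball w (bdist D w / 2)"
      have "eqhdist D x w' \<le> eqhdist D x w + eqhdist D w w'" by (rule eqhdist_triangle)
      also have "\<dots> \<le> eqhdist D x w + 1" using near w w' unfolding U_def by (intro add_mono) auto
      also have "\<dots> < \<infinity>" using w unfolding U_def by (simp add: less_top[symmetric])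
      finally show "w' \<in> U" using near w w' unfolding U_def by auto
    qed
    moreover have "0 < bdist D w / 2" using bdist_pos D w unfolding U_def by auto
    ultimately show "\<exists>e>0. ball w e \<subseteq> U" by blast
  qed
  have "open V"
  proof (rule openI)
    fix w assume w: "w \<in> V"
    have "ball w (bdist D w / 2) \<subseteq> V"
    proof
      fix w' assume w': "w' \<in> ball w (bdist D w / 2)"
      have "eqhdist D x w \<le> eqhdist D x w' + eqhdist D w' w" by (rule eqhdist_triangle)
      also have "eqhdist D w' w = eqhdist D w w'" by (rule eqhdist_sym)
      also have "eqhdist D x w' + \<dots> \<le> eqhdist D x w' + 1" using near w w' unfolding V_def by (intro add_mono) auto
      finally have "eqhdist D x w' = \<infinity>" using w unfolding V_def by auto
      then show "w' \<in> V" using near w w' unfolding V_def by auto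
    qed
    moreover have "0 < bdist D w / 2" using bdist_pos D w unfolding V_def by auto
    ultimately show "\<exists>e>0. ball w e \<subseteq> V" by blast
  qed
  have "U \<inter> D = {} \<or> V \<inter> D = {}"
    by (rule connectedD[OF D(3) \<open>open U\<close> \<open>open V\<close>]) (auto simp: U_def V_def less_top)
  moreover have "x \<in> U \<inter> D" using eqhdist_refl_le[OF D(1,2) xy(1)] xy unfolding U_def by auto
  ultimately have "V \<inter> D = {}" by auto
  then show ?thesis using xy unfolding V_def by (auto simp: less_top)
qed

lemma eqhdist_eq_qhdist:
  assumes "open D" "D \<noteq> UNIV" "connected D" "x \<in> D" "y \<in> D"
  shows "eqhdist D x y = ereal (qhdist D x y)"
  using eqhdist_eq_qhdist_finite eqhdist_finite assms by blast

lemma eqhdist_lt_half_imp_near: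
  assumes D: "open D" "D \<noteq> UNIV" "x0 \<in> D" and K: "eqhdist D x0 w < ereal (1/2)"
  shows "cmod (w - x0) \<le> bdist D x0"
proof -
  let ?d = "bdist D x0"
  have dp: "0 < ?d" using bdist_pos D by auto
  obtain g where g: "g \<in> qh_paths D x0 w" "qh_length D g 0 1 < ereal (1/2)"
    using K unfolding eqhdist_def by (auto simp: INF_less_iff)
  have gc: "continuous_on {0..1} g" and gi: "\<And>s. s \<in> {0..1} \<Longrightarrow> g s \<in> D"
    and g0: "g 0 = x0" and g1: "g 1 = w"
    using g(1) unfolding qh_paths_def path_def path_image_def pathstart_def pathfinish_def by auto
  obtain q where q: "qh_length D g 0 1 = ereal q" "0 \<le> q" "q < 1/2"
    using g(2) qh_length_nonneg[of 0 1 D g] by (cases "qh_length D g 0 1") auto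
  have "continuous_on {0..1} (\<lambda>s. cmod (g s - x0))" by (intro continuous_intros gc)
  from continuous_attains_sup[OF compact_Icc _ this]
  obtain xm where xm: "xm \<in> {0..1}" "\<And>y. y \<in> {0..1} \<Longrightarrow> cmod (g y - x0) \<le> cmod (g xm - x0)"
    by auto
  define Dm where "Dm = cmod (g xm - x0)"
  have Dm0: "0 \<le> Dm" unfolding Dm_def by simp
  have bound: "cmod (g x - x0) \<le> q * (?d + Dm)" if x: "x \<in> {0..1}" for x
  proof -
    have "qh_length D g 0 x + qh_length D g x 1 \<le> qh_length D g 0 1"
      unfolding qh_length_eq_wlength by (rule wlength_superadditive) (use x in \<open>auto simp: bdist_nonneg\<close>)
    moreover have "0 \<le> qh_length D g x 1" using x by (intro qh_length_nonneg) auto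
    ultimately have "qh_length D g 0 x \<le> ereal q" using q
      by (metis add.right_neutral add_left_mono order_trans)
    moreover have "ereal ((INF s\<in>{0..x}. 1 / bdist D (g s)) * cmod (g x - g 0)) \<le> qh_length D g 0 x"
      unfolding qh_length_eq_wlength by (rule wlength_ge_chord) (use x in \<open>auto simp: bdist_nonneg\<close>)
    ultimately have "ereal ((INF s\<in>{0..x}. 1 / bdist D (g s)) * cmod (g x - g 0)) \<le> ereal q"
      by (meson order_trans)
    then have le: "(INF s\<in>{0..x}. 1 / bdist D (g s)) * cmod (g x - g 0) \<le> q" by simp
    have inf: "1 / (?d + Dm) \<le> (INF s\<in>{0..x}. 1 / bdist D (g s))"
    proof (rule cINF_greatest)
      show "{0..x} \<noteq> {}" using x by auto
      fix s assume s: "s \<in> {0..x}"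
      then have sD: "g s \<in> D" using gi x by auto
      have p: "0 < bdist D (g s)" using bdist_pos[OF D(1,2) sD] .
      have "bdist D (g s) \<le> ?d + cmod (g s - x0)" using bdist_lipschitz[of D "g s" x0] by simp
      also have "\<dots> \<le> ?d + Dm" using xm(2)[of s] s x unfolding Dm_def by auto
      finally show "1 / (?d + Dm) \<le> 1 / bdist D (g s)" using p by (simp add: frac_le)
    qed
    have "cmod (g x - x0) / (?d + Dm) \<le> (INF s\<in>{0..x}. 1 / bdist D (g s)) * cmod (g x - g 0)"
      using mult_right_mono[OF inf, of "cmod (g x - g 0)"] g0 by simp
    then have "cmod (g x - x0) / (?d + Dm) \<le> q" using le by linarith
    then show ?thesis using dp Dm0 by (simp add: field_simps)
  qed
  have "Dm \<le> q * (?d + Dm)" using bound[OF xm(1)] unfolding Dm_def .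
  then have "Dm \<le> ?d"
  proof -
    assume h: "Dm \<le> q * (?d + Dm)"
    have "q * (?d + Dm) \<le> (1/2) * (?d + Dm)" using q dp Dm0 by (intro mult_right_mono) auto
    moreover have "(1/2) * (?d + Dm) = ?d/2 + Dm/2" by (simp add: algebra_simps)
    ultimately show ?thesis using h by linarith
  qed
  moreover have "cmod (w - x0) \<le> Dm" using xm(2)[of 1] g1 unfolding Dm_def by auto
  ultimately show ?thesis by linarith
qed

lemma qhdist_lipschitz_near:
  assumes D: "open D" "D \<noteq> UNIV" "connected D" "x0 \<in> D" "w \<in> D"
    and w': "cmod (w' - w) \<le> bdist D w / 2"
  shows "\<bar>qhdist D w' x0 - qhdist D w x0\<bar> \<le> 2 / bdist D w * cmod (w' - w)"
proof -
  have dp: "0 < bdist D w" using bdist_pos D by auto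
  have w'D: "w' \<in> D" using w' dp by (intro mem_of_dist_lt_bdist[of w]) (auto simp: dist_norm norm_minus_commute)
  have s: "eqhdist D w w' \<le> ereal (2 / bdist D w * cmod (w' - w))" by (rule eqhdist_segment_le) (use D w' in auto)
  have f1: "eqhdist D w x0 = ereal (qhdist D w x0)" by (rule eqhdist_eq_qhdist_finite, rule eqhdist_finite) (use D w'D in auto)
  have f2: "eqhdist D w' x0 = ereal (qhdist D w' x0)" by (rule eqhdist_eq_qhdist_finite, rule eqhdist_finite) (use D w'D in auto)
  have f3: "eqhdist D w w' = ereal (qhdist D w w')" by (rule eqhdist_eq_qhdist_finite, rule eqhdist_finite) (use D w'D in auto)
  have a: "eqhdist D w' x0 \<le> eqhdist D w' w + eqhdist D w x0" by (rule eqhdist_triangle)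
  have b: "eqhdist D w x0 \<le> eqhdist D w w' + eqhdist D w' x0" by (rule eqhdist_triangle)
  have "qhdist D w w' \<le> 2 / bdist D w * cmod (w' - w)" using s f3 by simp
  moreover have "qhdist D w' x0 \<le> qhdist D w w' + qhdist D w x0" using a f1 f2 f3 eqhdist_sym[of D w' w] by simp
  moreover have "qhdist D w x0 \<le> qhdist D w w' + qhdist D w' x0" using b f1 f2 f3 by simp
  ultimately show ?thesis by linarith
qed

lemma continuous_on_qhdist:
  assumes D: "open D" "D \<noteq> UNIV" "connected D" "x0 \<in> D"
  shows "continuous_on D (\<lambda>w. qhdist D w x0)"
  unfolding continuous_on_iff
proof (intro ballI allI impI)
  fix w e assume w: "w \<in> D" and e: "(0::real) < e"
  have dp: "0 < bdist D w" using bdist_pos D w by auto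
  define d where "d = min (bdist D w / 2) (e * bdist D w / 4)"
  have d: "0 < d" using dp e unfolding d_def by auto
  show "\<exists>d>0. \<forall>x'\<in>D. dist x' w < d \<longrightarrow> dist (qhdist D x' x0) (qhdist D w x0) < e"
  proof (intro exI[of _ d] conjI ballI impI d)
    fix x' assume x': "x' \<in> D" "dist x' w < d"
    have c: "cmod (x' - w) < d" using x' by (simp add: dist_norm)
    have "\<bar>qhdist D x' x0 - qhdist D w x0\<bar> \<le> 2 / bdist D w * cmod (x' - w)"
      by (rule qhdist_lipschitz_near) (use D w c in \<open>auto simp: d_def\<close>)
    also have "\<dots> < 2 / bdist D w * d" using c dp by (intro mult_strict_left_mono) auto
    also have "\<dots> \<le> e / 2" using dp unfolding d_def by (simp add: field_simps min_def)
    finally show "dist (qhdist D x' x0) (qhdist D w x0) < e" using e by (simp add: dist_real_def)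
  qed
qed

lemma qhdist_square_measurable:
  assumes D: "open D" "D \<noteq> UNIV" "connected D" "x0 \<in> D"
  shows "(\<lambda>x. ennreal ((qhdist D x x0)\<^sup>2) * indicator D x) \<in> borel_measurable lborel"
proof -
  have "continuous_on D (\<lambda>x. (qhdist D x x0)\<^sup>2)"
    using continuous_on_qhdist[OF D] by (intro continuous_intros)
  then have m: "(\<lambda>x. indicator D x *\<^sub>R (qhdist D x x0)\<^sup>2) \<in> borel_measurable borel"
    using D(1) by (intro borel_measurable_continuous_on_indicator) auto
  have eq: "(\<lambda>x. ennreal ((qhdist D x x0)\<^sup>2) * indicator D x) = (\<lambda>x. ennreal (indicator D x *\<^sub>R (qhdist D x x0)\<^sup>2))"
    by (auto simp: fun_eq_iff indicator_def)
  show ?thesis unfolding eq using m by (simp add: measurable_lborel1)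
qed

definition uniform_partition :: "real \<Rightarrow> real \<Rightarrow> nat \<Rightarrow> nat \<Rightarrow> real" where
  "uniform_partition s t N i = s + real i * (t - s) / real N"

lemma uniform_partition_0 [simp]: "uniform_partition s t N 0 = s"
  unfolding uniform_partition_def by simp

lemma uniform_partition_last: "N > 0 \<Longrightarrow> uniform_partition s t N N = t"
  unfolding uniform_partition_def by simp

lemma uniform_partition_step: "uniform_partition s t N (Suc i) - uniform_partition s t N i = (t - s) / N"
  unfolding uniform_partition_def by (simp add: diff_divide_distrib[symmetric] algebra_simps)

lemma uniform_partition_mono:
  assumes "s \<le> t" "i \<le> j"
  shows "uniform_partition s t N i \<le> uniform_partition s t N j"
  unfolding uniform_partition_def using assms by (intro add_left_mono divide_right_mono mult_right_mono) auto

lemma uniform_partition_range: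
  assumes "s \<le> t" "i \<le> N"
  shows "s \<le> uniform_partition s t N i" "uniform_partition s t N i \<le> t"
proof -
  show "s \<le> uniform_partition s t N i"
    using uniform_partition_mono[OF assms(1), of 0 i N] by simp
  have "real i * (t - s) / real N \<le> t - s"
  proof (cases "N = 0")
    case False
    have "real i * (t - s) \<le> real N * (t - s)" using assms by (intro mult_right_mono) auto
    then show ?thesis using False by (simp add: field_simps)
  qed (use assms in auto)
  then show "uniform_partition s t N i \<le> t" unfolding uniform_partition_def by simp
qed

lemma uniform_partition_fine:
  assumes h: "continuous_on {s..t} h" and "s \<le> t" "0 < e"
  obtains N where "N \<ge> 1"
    "\<And>i x. i < N \<Longrightarrow> uniform_partition s t N i \<le> x \<Longrightarrow> x \<le> uniform_partition s t N (Suc i) \<Longrightarrow>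
       dist (h x) (h (uniform_partition s t N i)) < e"
proof -
  obtain eta where eta: "eta > 0"
    "\<And>x x'. x \<in> {s..t} \<Longrightarrow> x' \<in> {s..t} \<Longrightarrow> dist x' x < eta \<Longrightarrow> dist (h x') (h x) < e"
    using compact_uniformly_continuous[OF h compact_Icc] \<open>0 < e\<close>
    unfolding uniformly_continuous_on_def by metis
  define N where "N = nat \<lceil>(t - s) / eta\<rceil> + 1"
  have "(t - s) / eta < N" unfolding N_def by linarith
  then have "t - s < eta * N" using eta(1) by (simp add: field_simps)
  moreover have "N \<ge> 1" unfolding N_def by simp
  ultimately have N: "(t - s) / N < eta" using eta(1) by (simp add: field_simps)
  have "dist (h x) (h (uniform_partition s t N i)) < e"
    if "i < N" "uniform_partition s t N i \<le> x" "x \<le> uniform_partition s t N (Suc i)" for i x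
  proof (rule eta(2))
    show "uniform_partition s t N i \<in> {s..t}" "x \<in> {s..t}"
      using uniform_partition_range[OF \<open>s \<le> t\<close>, of i N] uniform_partition_range[OF \<open>s \<le> t\<close>, of "Suc i" N]
        that by auto
    show "dist x (uniform_partition s t N i) < eta"
      using that uniform_partition_step[of s t N i] N by (simp add: dist_real_def)
  qed
  then show ?thesis using that[of N] \<open>N \<ge> 1\<close> by blast
qed

lemma two_mul_le_amgm:
  fixes d L lam a :: real
  assumes "0 < lam" "0 < a" "0 \<le> L"
  shows "2 * d * L \<le> lam * (L * a * d\<^sup>2) + (1 / lam) * (L / a)"
proof -
  have "0 \<le> (lam * a * d - 1)\<^sup>2 / (lam * a)" using assms by simp
  then have "0 \<le> lam * a * d\<^sup>2 - 2 * d + 1 / (lam * a)"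
    using assms by (simp add: power2_eq_square field_simps)
  then have "0 \<le> L * (lam * a * d\<^sup>2 - 2 * d + 1 / (lam * a))" using assms by simp
  then show ?thesis by (simp add: algebra_simps)
qed

lemma sum_two_mul_le_amgm:
  fixes \<delta> L a :: "nat \<Rightarrow> real"
  assumes "0 < lam" "\<And>i. i < N \<Longrightarrow> 0 < a i" "\<And>i. i < N \<Longrightarrow> 0 \<le> L i"
  shows "(\<Sum>i<N. 2 * \<delta> i * L i) \<le> lam * (\<Sum>i<N. L i * a i * (\<delta> i)\<^sup>2) + (1 / lam) * (\<Sum>i<N. L i / a i)"
proof -
  have "(\<Sum>i<N. 2 * \<delta> i * L i) \<le> (\<Sum>i<N. lam * (L i * a i * (\<delta> i)\<^sup>2) + (1 / lam) * (L i / a i))"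
    using assms by (intro sum_mono two_mul_le_amgm) auto
  then show ?thesis by (simp add: sum.distrib sum_distrib_left)
qed

lemma div_square_le_telescoping:
  fixes a b L :: real
  assumes "1 \<le> a" "0 \<le> L" "L \<le> 3/2" "a + L \<le> b"
  shows "L / a\<^sup>2 \<le> 3 * (1 / a - 1 / b)"
proof -
  have "1 / b \<le> 1 / (a + L)" using assms by (intro divide_left_mono) auto
  moreover have "1 / a - 1 / (a + L) = L / (a * (a + L))" using assms by (simp add: field_simps)
  moreover have "L / a\<^sup>2 \<le> 3 * (L / (a * (a + L)))"
  proof -
    have "a + L \<le> 3 * a" using assms by auto
    then have le: "L * (a + L) \<le> 3 * L * a" using assms by (metis mult.assoc mult.commute mult_left_mono)
    have p: "0 < a\<^sup>2 * (a + L)" using assms by simp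
    have ne: "a + L \<noteq> 0" using assms by auto
    have "L / a\<^sup>2 = L * (a + L) / (a\<^sup>2 * (a + L))" using nonzero_mult_divide_mult_cancel_right[OF ne, of L "a\<^sup>2"] by simp
    also have "\<dots> \<le> 3 * L * a / (a\<^sup>2 * (a + L))" using le p by (intro divide_right_mono) auto
    also have "3 * L * a / (a\<^sup>2 * (a + L)) = (3 * L) * a / ((a * (a + L)) * a)"
      by (simp add: power2_eq_square mult_ac)
    also have "\<dots> = (3 * L) / (a * (a + L))"
      using assms by (intro nonzero_mult_divide_mult_cancel_right) auto
    also have "\<dots> = 3 * (L / (a * (a + L)))" by simp
    finally show ?thesis .
  qed
  ultimately show ?thesis
  proof -
    assume h1: "1 / b \<le> 1 / (a + L)" and h2: "1 / a - 1 / (a + L) = L / (a * (a + L))"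
      and h3: "L / a\<^sup>2 \<le> 3 * (L / (a * (a + L)))"
    have "L / (a * (a + L)) \<le> 1 / a - 1 / b" using h1 h2 by linarith
    then have "3 * (L / (a * (a + L))) \<le> 3 * (1 / a - 1 / b)" by simp
    then show ?thesis using h3 by linarith
  qed
qed

lemma sum_div_square_le:
  fixes U L :: "nat \<Rightarrow> real"
  assumes "0 \<le> U 0" "1 \<le> J" "J \<le> U 0 + 1"
    and L: "\<And>i. i < N \<Longrightarrow> 0 \<le> L i \<and> L i \<le> 3/2"
    and U: "\<And>i. i < N \<Longrightarrow> U i + L i \<le> U (Suc i)"
  shows "(\<Sum>i<N. L i / (U i + 1)\<^sup>2) \<le> 3 / J"
proof -
  have U0: "U 0 \<le> U i" if "i \<le> N" for i
    using that
  proof (induction i)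
    case (Suc i)
    then have "U 0 \<le> U i" by simp
    moreover have "U i + L i \<le> U (Suc i)" "0 \<le> L i" using L U Suc.prems by auto
    ultimately show ?case by linarith
  qed simp
  have "(\<Sum>i<N. L i / (U i + 1)\<^sup>2) \<le> (\<Sum>i<N. 3 / (U i + 1) - 3 / (U (Suc i) + 1))"
  proof (rule sum_mono)
    fix i assume "i \<in> {..<N}"
    then show "L i / (U i + 1)\<^sup>2 \<le> 3 / (U i + 1) - 3 / (U (Suc i) + 1)"
      using div_square_le_telescoping[of "U i + 1" "L i" "U (Suc i) + 1"] U0[of i] L U assms(1)
      by (force simp: right_diff_distrib)
  qed
  also have "\<dots> = 3 / (U 0 + 1) - 3 / (U N + 1)"
    by (rule sum_lessThan_telescope')
  also have "\<dots> \<le> 3 / (U 0 + 1)" using U0[of N] assms(1) by simp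
  also have "\<dots> \<le> 3 / J" using assms by (intro divide_left_mono) auto
  finally show ?thesis .
qed

lemma emeasure_ball_ge:
  fixes c :: complex assumes r: "0 < r"
  shows "ennreal (r\<^sup>2 / 4) \<le> emeasure lborel (ball c r)"
proof -
  let ?v = "Complex (r/4) (r/4)"
  have sub: "cbox (c - ?v) (c + ?v) \<subseteq> ball c r"
  proof
    fix x assume "x \<in> cbox (c - ?v) (c + ?v)"
    then have b: "Re c - r/4 \<le> Re x" "Re x \<le> Re c + r/4" "Im c - r/4 \<le> Im x" "Im x \<le> Im c + r/4"
      unfolding in_cbox_complex_iff by auto
    have a: "\<bar>Re (x - c)\<bar> \<le> r/4" "\<bar>Im (x - c)\<bar> \<le> r/4"
      unfolding abs_le_iff minus_complex.sel using b by (intro conjI; linarith)+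
    have "cmod (x - c) \<le> \<bar>Re (x - c)\<bar> + \<bar>Im (x - c)\<bar>" by (rule cmod_le)
    then have "cmod (x - c) < r" using a r by linarith
    then show "x \<in> ball c r" by (simp add: dist_norm norm_minus_commute)
  qed
  have "emeasure lborel (cbox (c - ?v) (c + ?v)) = ennreal (r\<^sup>2 / 4)"
    using r by (simp add: emeasure_lborel_cbox_eq Basis_complex_def power2_eq_square
        ennreal_mult[symmetric] field_simps)
  then show ?thesis using emeasure_mono[OF sub] by (metis sets_lborel sets.Int_space_eq1 measurable_sets_borel
      emeasure_mono open_ball borel_open)
qed

lemma sum_ball_areas_le_nn_integral:
  fixes z :: "nat \<Rightarrow> complex" and f :: "complex \<Rightarrow> ennreal"
  assumes c: "\<And>i. i < N \<Longrightarrow> 0 \<le> c i" and r: "\<And>i. i < N \<Longrightarrow> 0 < r i"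
    and f: "\<And>w. ennreal (\<Sum>i<N. c i * indicator (ball (z i) (r i)) w) \<le> f w"
  shows "ennreal (\<Sum>i<N. c i * (r i)\<^sup>2 / 4) \<le> (\<integral>\<^sup>+w. f w \<partial>lborel)"
proof -
  have "ennreal (\<Sum>i<N. c i * (r i)\<^sup>2 / 4) = (\<Sum>i<N. ennreal (c i) * ennreal ((r i)\<^sup>2 / 4))"
    using c by (subst sum_ennreal[symmetric]) (auto simp: ennreal_mult[symmetric] intro!: sum.cong)
  also have "\<dots> \<le> (\<Sum>i<N. ennreal (c i) * emeasure lborel (ball (z i) (r i)))"
    using r by (intro sum_mono mult_left_mono emeasure_ball_ge) auto
  also have "\<dots> = (\<Sum>i<N. \<integral>\<^sup>+w. ennreal (c i) * indicator (ball (z i) (r i)) w \<partial>lborel)"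
    by (simp add: nn_integral_cmult_indicator)
  also have "\<dots> = (\<integral>\<^sup>+w. (\<Sum>i<N. ennreal (c i) * indicator (ball (z i) (r i)) w) \<partial>lborel)"
    by (rule nn_integral_sum[symmetric])
      (auto intro!: borel_measurable_times_ennreal borel_measurable_indicator borel_open)
  also have "\<dots> = (\<integral>\<^sup>+w. ennreal (\<Sum>i<N. c i * indicator (ball (z i) (r i)) w) \<partial>lborel)"
  proof (rule nn_integral_cong)
    fix w
    have "ennreal (c i) * indicator (ball (z i) (r i)) w = ennreal (c i * indicator (ball (z i) (r i)) w)"
      for i by (cases "w \<in> ball (z i) (r i)") auto
    then have "(\<Sum>i<N. ennreal (c i) * indicator (ball (z i) (r i)) w) =
        (\<Sum>i<N. ennreal (c i * indicator (ball (z i) (r i)) w))" by (simp only:)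
    also have "\<dots> = ennreal (\<Sum>i<N. c i * indicator (ball (z i) (r i)) w)"
      by (rule sum_ennreal) (use c in auto)
    finally show "(\<Sum>i<N. ennreal (c i) * indicator (ball (z i) (r i)) w) =
        ennreal (\<Sum>i<N. c i * indicator (ball (z i) (r i)) w)" .
  qed
  also have "\<dots> \<le> (\<integral>\<^sup>+w. f w \<partial>lborel)" by (intro nn_integral_mono f)
  finally show ?thesis .
qed

section \<open>Quasigeodesics\<close>

text \<open>The slack \<open>+ 1\<close> lets the same estimate cover quasihyperbolic geodesics and almost minimising
  paths between two points.\<close>

definition qh_quasigeodesic :: "complex set \<Rightarrow> (real \<Rightarrow> complex) \<Rightarrow> real \<Rightarrow> real \<Rightarrow> bool" where
  "qh_quasigeodesic D h a b \<longleftrightarrow> a \<le> b \<and> continuous_on {a..b} h \<and> h ` {a..b} \<subseteq> D \<and>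
     qh_length D h a b < \<infinity> \<and>
     (\<forall>x y. a \<le> x \<longrightarrow> x \<le> y \<longrightarrow> y \<le> b \<longrightarrow> qh_length D h x y \<le> eqhdist D (h x) (h y) + 1)"

lemma qh_quasigeodesic_le:
  assumes "qh_quasigeodesic D h a b" "a \<le> x" "x \<le> y" "y \<le> b"
  shows "qh_length D h x y \<le> eqhdist D (h x) (h y) + 1"
  using assms unfolding qh_quasigeodesic_def by blast

lemma qh_quasigeodesic_subarc_real:
  assumes "qh_quasigeodesic D h a b" "a \<le> x" "x \<le> y" "y \<le> b"
  shows "qh_length D h x y = ereal (real_of_ereal (qh_length D h x y))"
    and "0 \<le> real_of_ereal (qh_length D h x y)"
  using qh_length_subarc_real[OF _ assms(2-4)] assms(1) unfolding qh_quasigeodesic_def by blast+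

lemma eqhdist_le_qh_length_quasigeodesic:
  assumes D: "open D" "D \<noteq> UNIV" and qg: "qh_quasigeodesic D h a b" and "a \<le> x" "x \<le> y" "y \<le> b"
  shows "eqhdist D (h x) (h y) \<le> qh_length D h x y"
proof (rule eqhdist_le_qh_length_arc[OF D \<open>x \<le> y\<close>])
  show "continuous_on {x..y} h" "h ` {x..y} \<subseteq> D"
    using qg assms(4-6) unfolding qh_quasigeodesic_def by (auto elim: continuous_on_subset)
  show "qh_length D h x y < \<infinity>"
    using qh_length_subarc_finite[OF _ assms(4-6)] qg unfolding qh_quasigeodesic_def by blast
qed

lemma qh_geodesic_imp_quasigeodesic:
  assumes geo: "qh_geodesic D g I" and I: "is_interval I" "a \<in> I" "b \<in> I" and "a \<le> b"
  shows "qh_quasigeodesic D g a b"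
proof -
  have gc: "continuous_on I g" and gi: "g ` I \<subseteq> D"
    and gq: "\<And>x y. x \<in> I \<Longrightarrow> y \<in> I \<Longrightarrow> x \<le> y \<Longrightarrow> qh_length D g x y = ereal (qhdist D (g x) (g y))"
    using geo unfolding qh_geodesic_def by auto
  have sub: "{a..b} \<subseteq> I" using I unfolding is_interval_1 by (meson atLeastAtMost_iff subsetI)
  show ?thesis unfolding qh_quasigeodesic_def
  proof (intro conjI allI impI)
    show "continuous_on {a..b} g" using gc sub by (rule continuous_on_subset)
    show "g ` {a..b} \<subseteq> D" using gi sub by blast
    show "qh_length D g a b < \<infinity>" using gq[OF I(2,3) \<open>a \<le> b\<close>] by simp
    fix x y assume "a \<le> x" "x \<le> y" "y \<le> b"
    then have "qh_length D g x y = ereal (qhdist D (g x) (g y))" using sub by (intro gq) auto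
    also have "\<dots> \<le> eqhdist D (g x) (g y)" by (rule qhdist_le_eqhdist)
    also have "\<dots> \<le> eqhdist D (g x) (g y) + 1" by (rule add_increasing2) auto
    finally show "qh_length D g x y \<le> eqhdist D (g x) (g y) + 1" .
  qed fact
qed

lemma qh_quasigeodesic_reflect:
  assumes qg: "qh_quasigeodesic D h a b"
  shows "qh_quasigeodesic D (\<lambda>x. h (c - x)) (c - b) (c - a)"
proof -
  have hc: "continuous_on {a..b} h" and hi: "h ` {a..b} \<subseteq> D" and fin: "qh_length D h a b < \<infinity>"
    and q: "\<And>x y. a \<le> x \<Longrightarrow> x \<le> y \<Longrightarrow> y \<le> b \<Longrightarrow> qh_length D h x y \<le> eqhdist D (h x) (h y) + 1"
    using qg unfolding qh_quasigeodesic_def by auto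
  have refl: "qh_length D (\<lambda>x. h (c - x)) x y \<le> qh_length D h (c - y) (c - x)" for x y
    unfolding qh_length_eq_wlength by (rule wlength_reflect_le)
  have "qh_length D (\<lambda>x. h (c - x)) (c - b) (c - a) \<le> qh_length D h a b"
    using refl[of "c - b" "c - a"] by simp
  then have fin': "qh_length D (\<lambda>x. h (c - x)) (c - b) (c - a) < \<infinity>"
    using fin by (rule le_less_trans)
  have im: "(\<lambda>x. c - x) ` {c - b..c - a} \<subseteq> {a..b}" by auto
  have "continuous_on {c - b..c - a} (\<lambda>x. h (c - x))"
    by (rule continuous_on_compose2[OF hc _ im]) (intro continuous_intros)
  moreover have "(\<lambda>x. h (c - x)) ` {c - b..c - a} \<subseteq> D"
    using hi im by (simp add: image_subset_iff)
  moreover have "qh_length D (\<lambda>x. h (c - x)) x y \<le> eqhdist D (h (c - x)) (h (c - y)) + 1"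
    if "c - b \<le> x" "x \<le> y" "y \<le> c - a" for x y
  proof -
    have "qh_length D h (c - y) (c - x) \<le> eqhdist D (h (c - y)) (h (c - x)) + 1"
      using that by (intro q) auto
    with refl[of x y] have "qh_length D (\<lambda>x. h (c - x)) x y \<le> eqhdist D (h (c - y)) (h (c - x)) + 1"
      by (rule order_trans)
    then show ?thesis using eqhdist_sym[of D "h (c - x)" "h (c - y)"] by simp
  qed
  ultimately show ?thesis using qg fin' unfolding qh_quasigeodesic_def by auto
qed

locale proper_domain =
  fixes D :: "complex set"
  assumes open_D: "open D" and connected_D: "connected D" and proper_D: "D \<noteq> UNIV"
begin

lemma near_minimal_quasigeodesic:
  assumes x: "x \<in> D" and z: "z \<in> D"
  obtains g where "qh_quasigeodesic D g 0 1" "g 0 = x" "g 1 = z"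
proof -
  have kxz: "eqhdist D x z = ereal (qhdist D x z)"
    by (rule eqhdist_eq_qhdist[OF open_D proper_D connected_D x z])
  then have "eqhdist D x z < ereal (qhdist D x z + 1)" by simp
  then obtain g where g: "g \<in> qh_paths D x z" "qh_length D g 0 1 < ereal (qhdist D x z + 1)"
    unfolding eqhdist_def by (auto simp: INF_less_iff)
  have gc: "continuous_on {0..1} g" and gi: "g ` {0..1} \<subseteq> D" and g0: "g 0 = x" and g1: "g 1 = z"
    using g(1) unfolding qh_paths_def path_def path_image_def pathstart_def pathfinish_def by auto
  have fin: "qh_length D g 0 1 < \<infinity>" using less_trans[OF g(2), of \<infinity>] by simp
  define q where "q u v = real_of_ereal (qh_length D g u v)" for u v
  have Q: "qh_length D g u v = ereal (q u v)" if "0 \<le> u" "u \<le> v" "v \<le> 1" for u v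
    using qh_length_subarc_real(1)[OF fin that] unfolding q_def .
  have K: "eqhdist D (g u) (g v) \<le> qh_length D g u v" if "0 \<le> u" "u \<le> v" "v \<le> 1" for u v
  proof (rule eqhdist_le_qh_length_arc[OF open_D proper_D \<open>u \<le> v\<close>])
    show "continuous_on {u..v} g" "g ` {u..v} \<subseteq> D"
      using gc gi that by (auto elim: continuous_on_subset)
    show "qh_length D g u v < \<infinity>" using qh_length_subarc_finite[OF fin that] .
  qed
  have "qh_length D g u v \<le> eqhdist D (g u) (g v) + 1" if uv: "0 \<le> u" "u \<le> v" "v \<le> 1" for u v
  proof -
    have w: "\<And>z. 0 \<le> 1 / bdist D z" by (simp add: bdist_nonneg)
    have split: "q 0 1 = q 0 u + q u v + q v 1"
    proof -
      have "qh_length D g 0 1 = qh_length D g 0 u + qh_length D g u 1"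
        "qh_length D g u 1 = qh_length D g u v + qh_length D g v 1"
        unfolding qh_length_eq_wlength using uv w by (intro wlength_additive; simp)+
      then show ?thesis using Q uv by simp
    qed
    have kuv: "eqhdist D (g u) (g v) = ereal (qhdist D (g u) (g v))"
      by (rule eqhdist_eq_qhdist[OF open_D proper_D connected_D]) (use gi uv in auto)
    have "eqhdist D x z \<le> eqhdist D x (g u) + (eqhdist D (g u) (g v) + eqhdist D (g v) z)"
      using eqhdist_triangle[where x=x and y="g u" and z=z]
        add_left_mono[OF eqhdist_triangle[where x="g u" and y="g v" and z=z]]
      by (rule order_trans)
    also have "\<dots> \<le> ereal (q 0 u) + (ereal (qhdist D (g u) (g v)) + ereal (q v 1))"
      using K[of 0 u] K[of v 1] Q[of 0 u] Q[of v 1] uv g0 g1 kuv by (intro add_mono) auto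
    finally have "qhdist D x z \<le> q 0 u + qhdist D (g u) (g v) + q v 1" using kxz by simp
    moreover have "q 0 1 < qhdist D x z + 1" using g(2) Q[of 0 1] by simp
    ultimately have "q u v \<le> qhdist D (g u) (g v) + 1" using split by linarith
    then show ?thesis using Q[OF uv] kuv by simp
  qed
  then have "qh_quasigeodesic D g 0 1"
    using gc gi fin unfolding qh_quasigeodesic_def by auto
  then show ?thesis using that g0 g1 by blast
qed

end

section \<open>The length estimate\<close>

context proper_domain
begin

lemma quasigeodesic_short_piece:
  assumes qg: "qh_quasigeodesic D h a b" "a \<le> x" "x \<le> y" "y \<le> b"
    and close: "cmod (h y - h x) \<le> bdist D (h x) / 4"
  shows "qh_length D h x y \<le> ereal (3/2)"
proof -
  have hx: "h x \<in> D" using qg unfolding qh_quasigeodesic_def by auto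
  have \<delta>: "0 < bdist D (h x)" using bdist_pos[OF open_D proper_D hx] .
  have "qh_length D h x y \<le> eqhdist D (h x) (h y) + 1" by (rule qh_quasigeodesic_le[OF qg])
  also have "eqhdist D (h x) (h y) \<le> ereal (2 / bdist D (h x) * cmod (h y - h x))"
    by (rule eqhdist_segment_le[OF open_D proper_D hx]) (use close \<delta> in linarith)
  also have "2 / bdist D (h x) * cmod (h y - h x) \<le> 1/2" using close \<delta> by (simp add: field_simps)
  finally show ?thesis by (simp add: add_right_mono one_ereal_def)
qed

lemma quasigeodesic_qh_length_le_3:
  assumes qg: "qh_quasigeodesic D h a b" "a \<le> x" "x \<le> y" "y \<le> b"
    and w: "w \<in> ball (h x) (bdist D (h x) / 2)" "w \<in> ball (h y) (bdist D (h y) / 2)"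
  shows "qh_length D h x y \<le> 3"
proof -
  have "h x \<in> D" "h y \<in> D" using qg unfolding qh_quasigeodesic_def by auto
  then have 1: "eqhdist D (h x) w \<le> 1" and 2: "eqhdist D w (h y) \<le> 1"
    using eqhdist_half_ball_le_one(1)[OF open_D proper_D _ w(1)]
      eqhdist_half_ball_le_one(1)[OF open_D proper_D _ w(2)] eqhdist_sym[of D w "h y"] by auto
  have "qh_length D h x y \<le> eqhdist D (h x) (h y) + 1" by (rule qh_quasigeodesic_le[OF qg])
  also have "\<dots> \<le> (eqhdist D (h x) w + eqhdist D w (h y)) + 1"
    by (intro add_right_mono eqhdist_triangle)
  also have "\<dots> \<le> (1 + 1) + 1" using 1 2 by (intro add_mono) auto
  finally show ?thesis by (simp add: one_ereal_def)
qed

lemma quasigeodesic_ball_overlap: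
  fixes p L :: "nat \<Rightarrow> real"
  assumes qg: "qh_quasigeodesic D h a b"
    and p: "\<And>i. p i \<le> p (Suc i)" "a \<le> p 0" "p N \<le> b"
    and L: "\<And>i. i < N \<Longrightarrow> qh_length D h (p i) (p (Suc i)) = ereal (L i)"
      "\<And>i. i < N \<Longrightarrow> 0 \<le> L i" "\<And>i. i < N \<Longrightarrow> L i \<le> 3/2"
  shows "(\<Sum>i<N. L i * indicator (ball (h (p i)) (bdist D (h (p i)) / 2)) w) \<le> 9/2"
proof -
  define B where "B i = ball (h (p i)) (bdist D (h (p i)) / 2)" for i
  have pmono: "p i \<le> p j" if "i \<le> j" for i j using lift_Suc_mono_le[of p, OF p(1) that] .
  have prange: "a \<le> p i" "p i \<le> b" if "i \<le> N" for i
    using pmono[of 0 i] pmono[of i N] p that by auto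
  show ?thesis
  proof (cases "\<exists>i<N. w \<in> B i")
    case False
    then have "(\<Sum>i<N. L i * indicator (B i) w) = 0" by (intro sum.neutral) auto
    then show ?thesis unfolding B_def by simp
  next
    case True
    define S where "S = {i. i < N \<and> w \<in> B i}"
    have Sf: "finite S" "S \<noteq> {}" using True unfolding S_def by auto
    define i1 where "i1 = Min S"
    define i2 where "i2 = Max S"
    have i1S: "i1 \<in> S" and i2S: "i2 \<in> S" using Sf unfolding i1_def i2_def by auto
    have inS: "i1 \<le> i \<and> i \<le> i2" if "i \<in> S" for i using Sf that unfolding i1_def i2_def by auto
    have i12: "i1 \<le> i2" using inS[OF i1S] by auto
    have i2N: "i2 < N" using i2S unfolding S_def by auto
    have "(\<Sum>i<N. L i * indicator (B i) w) \<le> (\<Sum>i<N. if i \<in> {i1..i2} then L i else 0)"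
      by (rule sum_mono) (use L(2) inS in \<open>auto simp: S_def indicator_def\<close>)
    also have "\<dots> = sum L ({..<N} \<inter> {i1..i2})" by (rule sum.inter_restrict[symmetric]) simp
    also have "{..<N} \<inter> {i1..i2} = {i1..<Suc i2}" using i2N by auto
    also have "sum L {i1..<Suc i2} = sum L {i1..<i2} + L i2" using i12 by (rule sum.atLeastLessThan_Suc)
    also have "sum L {i1..<i2} \<le> 3"
    proof -
      have "ereal (sum L {i1..<i2}) = (\<Sum>i\<in>{i1..<i2}. qh_length D h (p i) (p (Suc i)))"
        using L(1) i2N by simp
      also have "\<dots> = qh_length D h (p i1) (p i2)"
        unfolding qh_length_eq_wlength by (rule wlength_chain[symmetric]) (use p i12 in \<open>auto simp: bdist_nonneg\<close>)
      also have "\<dots> \<le> 3"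
        using quasigeodesic_qh_length_le_3[OF qg prange(1)[of i1] pmono[OF i12] prange(2)[of i2]] i12 i2N
          i1S i2S unfolding S_def B_def by auto
      finally show ?thesis by simp
    qed
    finally show ?thesis using L(3)[OF i2N] unfolding B_def by linarith
  qed
qed

lemma uniform_partition_bdist_fine:
  assumes hc: "continuous_on {s..t} h" and hD: "h ` {s..t} \<subseteq> D" and "s \<le> t"
  obtains N where "N \<ge> 1"
    "\<And>i x. i < N \<Longrightarrow> uniform_partition s t N i \<le> x \<Longrightarrow> x \<le> uniform_partition s t N (Suc i) \<Longrightarrow>
       cmod (h x - h (uniform_partition s t N i)) \<le> bdist D (h (uniform_partition s t N i)) / 4"
proof -
  have "continuous_on {s..t} (\<lambda>x. bdist D (h x))"
    unfolding bdist_def by (intro continuous_on_infdist hc)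
  from continuous_attains_inf[OF compact_Icc _ this]
  obtain xm where xm: "xm \<in> {s..t}" "\<And>y. y \<in> {s..t} \<Longrightarrow> bdist D (h xm) \<le> bdist D (h y)"
    using \<open>s \<le> t\<close> by auto
  have "h xm \<in> D" using hD xm(1) by blast
  then have m: "0 < bdist D (h xm)" by (rule bdist_pos[OF open_D proper_D])
  obtain N where N: "N \<ge> 1" and fine: "\<And>i x. i < N \<Longrightarrow> uniform_partition s t N i \<le> x \<Longrightarrow>
      x \<le> uniform_partition s t N (Suc i) \<Longrightarrow> dist (h x) (h (uniform_partition s t N i)) < bdist D (h xm) / 4"
    using uniform_partition_fine[OF hc \<open>s \<le> t\<close>, of "bdist D (h xm) / 4"] m by auto
  have "cmod (h x - h (uniform_partition s t N i)) \<le> bdist D (h (uniform_partition s t N i)) / 4"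
    if "i < N" "uniform_partition s t N i \<le> x" "x \<le> uniform_partition s t N (Suc i)" for i x
    using fine[OF that] xm(2)[of "uniform_partition s t N i"] uniform_partition_range[OF \<open>s \<le> t\<close>, of i N] that
    by (simp add: dist_norm)
  then show ?thesis using that N by blast
qed

lemma quasigeodesic_fine_partition:
  assumes qg: "qh_quasigeodesic D h a b" and st: "a \<le> s" "s \<le> t" "t \<le> b"
  obtains N where "N \<ge> 1"
    "\<And>i. i < N \<Longrightarrow>
       qh_length D h (uniform_partition s t N i) (uniform_partition s t N (Suc i)) \<le> ereal (3/2)"
    "curve_length h s t \<le> (\<Sum>i<N. ereal (2 * bdist D (h (uniform_partition s t N i))) *
       qh_length D h (uniform_partition s t N i) (uniform_partition s t N (Suc i)))"
proof -
  have hc: "continuous_on {s..t} h" and hD: "\<And>x. a \<le> x \<Longrightarrow> x \<le> b \<Longrightarrow> h x \<in> D"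
    using qg st unfolding qh_quasigeodesic_def by (auto elim: continuous_on_subset)
  obtain N where N: "N \<ge> 1" and fine: "\<And>i x. i < N \<Longrightarrow> uniform_partition s t N i \<le> x \<Longrightarrow>
      x \<le> uniform_partition s t N (Suc i) \<Longrightarrow>
      cmod (h x - h (uniform_partition s t N i)) \<le> bdist D (h (uniform_partition s t N i)) / 4"
    by (rule uniform_partition_bdist_fine[OF hc _ st(2)]) (use hD st in auto)
  define p where "p = uniform_partition s t N"
  define \<delta> where "\<delta> i = bdist D (h (p i))" for i
  have pmono: "p i \<le> p (Suc i)" for i unfolding p_def by (rule uniform_partition_mono) (use st in auto)
  have prange: "s \<le> p i" "p i \<le> t" if "i \<le> N" for i
    unfolding p_def using uniform_partition_range[OF st(2) that] .
  have pD: "h x \<in> D" if "i < N" "p i \<le> x" "x \<le> p (Suc i)" for i x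
    using hD prange[of i] prange[of "Suc i"] that st by auto
  have close: "cmod (h x - h (p i)) \<le> \<delta> i / 4" if "i < N" "p i \<le> x" "x \<le> p (Suc i)" for i x
    using fine that unfolding p_def \<delta>_def .
  have \<delta>_pos: "0 < \<delta> i" if "i < N" for i
    unfolding \<delta>_def using bdist_pos[OF open_D proper_D pD[OF that order_refl pmono]] .
  have short: "qh_length D h (p i) (p (Suc i)) \<le> ereal (3/2)" if i: "i < N" for i
    using quasigeodesic_short_piece[OF qg _ pmono, of i] prange[of i] prange[of "Suc i"] close[OF i pmono order_refl]
      i st unfolding \<delta>_def by auto
  have "curve_length h s t = wlength (\<lambda>_. 1) h (p 0) (p N)"
    using N by (simp add: curve_length_eq_wlength p_def uniform_partition_last)
  also have "\<dots> = (\<Sum>i<N. curve_length h (p i) (p (Suc i)))"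
    unfolding curve_length_eq_wlength
    by (subst wlength_chain[where w="\<lambda>_. 1" and p=p]) (auto simp: pmono atLeast0LessThan)
  also have "\<dots> \<le> (\<Sum>i<N. ereal (2 * \<delta> i) * qh_length D h (p i) (p (Suc i)))"
  proof (rule sum_mono)
    fix i assume "i \<in> {..<N}"
    then have i: "i < N" by simp
    show "curve_length h (p i) (p (Suc i)) \<le> ereal (2 * \<delta> i) * qh_length D h (p i) (p (Suc i))"
    proof (rule curve_length_le_qh_length[OF open_D proper_D])
      show "0 \<le> 2 * \<delta> i" using \<delta>_pos[OF i] by simp
      fix x assume x: "p i \<le> x" "x \<le> p (Suc i)"
      have "bdist D (h x) \<le> \<delta> i + cmod (h x - h (p i))"
        unfolding \<delta>_def by (rule bdist_lipschitz)
      then show "h x \<in> D \<and> bdist D (h x) \<le> 2 * \<delta> i"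
        using close[OF i x] \<delta>_pos[OF i] pD[OF i x] by simp
    qed
  qed
  finally show ?thesis using that N short unfolding p_def \<delta>_def by blast
qed

end

locale qh_integrable_domain = proper_domain +
  fixes x0 :: complex
  assumes x0_in_D: "x0 \<in> D"
    and square_integrable: "(\<integral>\<^sup>+x\<in>D. ennreal ((qhdist D x x0)\<^sup>2) \<partial>lborel) < \<infinity>"
begin

definition tail_mass :: ennreal where
  "tail_mass = (\<integral>\<^sup>+w\<in>D. ennreal ((qhdist D w x0 + 3)\<^sup>2) \<partial>lborel)"

text \<open>The factor \<open>80 = 16 \<cdot> 5\<close> comes from the area \<open>\<delta>\<^sup>2/16\<close> of a ball of radius \<open>\<delta>/2\<close> and the
  overlap bound \<open>9/2 \<le> 5\<close>, the summand \<open>3\<close> from the telescoping sum.\<close>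

definition length_const :: real where
  "length_const = 80 * enn2real tail_mass + 3"

lemma length_const_pos: "0 < length_const"
  unfolding length_const_def using enn2real_nonneg[of tail_mass] by linarith

lemma shifted_square_le:
  assumes w: "w \<in> D"
  shows "ennreal ((qhdist D w x0 + 3)\<^sup>2) \<le>
    74 * ennreal ((qhdist D w x0)\<^sup>2) + 18 * indicator (cball x0 (bdist D x0)) w"
proof (cases "qhdist D w x0 \<ge> 1/2")
  case True
  then have "(qhdist D w x0 + 3)\<^sup>2 \<le> (7 * qhdist D w x0)\<^sup>2"
    by (intro power_mono) auto
  also have "\<dots> \<le> 74 * (qhdist D w x0)\<^sup>2" by (simp add: power_mult_distrib)
  finally have "ennreal ((qhdist D w x0 + 3)\<^sup>2) \<le> ennreal (74 * (qhdist D w x0)\<^sup>2)"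
    by (rule ennreal_leI)
  then have "ennreal ((qhdist D w x0 + 3)\<^sup>2) \<le> 74 * ennreal ((qhdist D w x0)\<^sup>2)"
    by (simp add: ennreal_mult)
  then show ?thesis by (simp add: add_increasing2)
next
  case False
  have "eqhdist D x0 w = ereal (qhdist D w x0)"
    using eqhdist_eq_qhdist[OF open_D proper_D connected_D x0_in_D w] qhdist_sym by simp
  then have "cmod (w - x0) \<le> bdist D x0"
    using False by (intro eqhdist_lt_half_imp_near[OF open_D proper_D x0_in_D]) auto
  then have "indicator (cball x0 (bdist D x0)) w = (1::ennreal)"
    by (simp add: dist_norm norm_minus_commute)
  moreover have "(qhdist D w x0 + 3)\<^sup>2 \<le> 4\<^sup>2"
    using False qhdist_nonneg[of D w x0] by (intro power_mono) auto
  then have "ennreal ((qhdist D w x0 + 3)\<^sup>2) \<le> 18"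
    using ennreal_leI[of _ 18] by fastforce
  ultimately show ?thesis by (simp add: add_increasing)
qed

lemma tail_mass_finite: "tail_mass < \<infinity>"
proof -
  have meas: "(\<lambda>x. ennreal ((qhdist D x x0)\<^sup>2) * indicator D x) \<in> borel_measurable lborel"
    by (rule qhdist_square_measurable[OF open_D proper_D connected_D x0_in_D])
  have "tail_mass \<le> (\<integral>\<^sup>+w. 74 * (ennreal ((qhdist D w x0)\<^sup>2) * indicator D w) +
      18 * indicator (cball x0 (bdist D x0)) w \<partial>lborel)"
    unfolding tail_mass_def
    by (intro nn_integral_mono) (auto simp: indicator_def dest: shifted_square_le)
  also have "\<dots> = 74 * (\<integral>\<^sup>+w\<in>D. ennreal ((qhdist D w x0)\<^sup>2) \<partial>lborel) +
      18 * emeasure lborel (cball x0 (bdist D x0))"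
    using meas by (subst nn_integral_add)
      (auto intro!: borel_measurable_times_ennreal borel_measurable_indicator
        simp: nn_integral_cmult nn_integral_cmult_indicator)
  also have "\<dots> < \<infinity>"
    using square_integrable emeasure_bounded_finite[OF bounded_cball, of x0 "bdist D x0"]
    by (simp add: ennreal_mult_less_top)
  finally show ?thesis .
qed

end

context qh_integrable_domain
begin

lemma quasigeodesic_qh_length_from_x0_le:
  assumes qg: "qh_quasigeodesic D h t0 t1" and h0: "h t0 = x0" and x: "t0 \<le> x" "x \<le> t1"
    and w: "w \<in> ball (h x) (bdist D (h x) / 2)"
  shows "qh_length D h t0 x \<le> ereal (qhdist D w x0 + 2)"
proof -
  have "h x \<in> D" using qg x unfolding qh_quasigeodesic_def by auto
  then have wD: "w \<in> D" and "eqhdist D (h x) w \<le> 1"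
    using eqhdist_half_ball_le_one[OF open_D proper_D _ w] by auto
  then have wx: "eqhdist D w (h x) \<le> 1" using eqhdist_sym[of D w "h x"] by simp
  have "qh_length D h t0 x \<le> eqhdist D x0 (h x) + 1"
    using qh_quasigeodesic_le[OF qg order_refl x] h0 by simp
  also have "\<dots> \<le> (eqhdist D x0 w + eqhdist D w (h x)) + 1"
    by (intro add_right_mono eqhdist_triangle)
  also have "\<dots> \<le> (ereal (qhdist D w x0) + 1) + 1"
    using wx eqhdist_eq_qhdist[OF open_D proper_D connected_D x0_in_D wD] qhdist_sym[of D w x0]
    by (intro add_mono order_refl) auto
  finally show ?thesis by (simp add: one_ereal_def add.commute)
qed

lemma quasigeodesic_ball_sum_le:
  fixes p L :: "nat \<Rightarrow> real"
  assumes qg: "qh_quasigeodesic D h t0 t1" and h0: "h t0 = x0"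
    and p: "\<And>i. p i \<le> p (Suc i)" "t0 \<le> p 0" "p N \<le> t1"
    and L: "\<And>i. i < N \<Longrightarrow> qh_length D h (p i) (p (Suc i)) = ereal (L i)"
      "\<And>i. i < N \<Longrightarrow> 0 \<le> L i" "\<And>i. i < N \<Longrightarrow> L i \<le> 3/2"
  shows "(\<Sum>i<N. L i * (real_of_ereal (qh_length D h t0 (p i)) + 1)\<^sup>2 * (bdist D (h (p i)))\<^sup>2)
    \<le> 80 * enn2real tail_mass"
proof -
  define U where "U i = real_of_ereal (qh_length D h t0 (p i))" for i
  define \<delta> where "\<delta> i = bdist D (h (p i))" for i
  define B where "B i = ball (h (p i)) (\<delta> i / 2)" for i
  define c where "c i = L i * (U i + 1)\<^sup>2 / 5" for i
  have pmono: "p i \<le> p j" if "i \<le> j" for i j using lift_Suc_mono_le[of p, OF p(1) that] .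
  have prange: "t0 \<le> p i" "p i \<le> t1" if "i \<le> N" for i
    using pmono[of 0 i] pmono[of i N] p that by auto
  have hD: "h (p i) \<in> D" if "i \<le> N" for i
    using qg prange[OF that] unfolding qh_quasigeodesic_def by auto
  have \<delta>_pos: "0 < \<delta> i" if "i \<le> N" for i
    unfolding \<delta>_def using bdist_pos[OF open_D proper_D hD[OF that]] .
  have U: "qh_length D h t0 (p i) = ereal (U i)" "0 \<le> U i" if "i \<le> N" for i
    using qh_quasigeodesic_subarc_real[OF qg order_refl prange[OF that]] unfolding U_def by auto
  have c0: "0 \<le> c i" if "i < N" for i using L(2)[OF that] unfolding c_def by simp
  have U_le: "U i + 1 \<le> qhdist D w x0 + 3" if i: "i < N" and w: "w \<in> B i" for i w
    using quasigeodesic_qh_length_from_x0_le[OF qg h0 prange[of i] w[unfolded B_def \<delta>_def]] U(1)[of i] i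
    by simp
  have "ennreal (\<Sum>i<N. c i * indicator (B i) w) \<le> ennreal ((qhdist D w x0 + 3)\<^sup>2) * indicator D w" for w
  proof (cases "w \<in> D")
    case False
    then have "w \<notin> B i" if "i < N" for i
      using eqhdist_half_ball_le_one(2)[OF open_D proper_D hD, of i w] that unfolding B_def \<delta>_def by auto
    then show ?thesis by (simp add: sum.neutral)
  next
    case True
    have "(\<Sum>i<N. c i * indicator (B i) w) \<le> (\<Sum>i<N. (qhdist D w x0 + 3)\<^sup>2 / 5 * (L i * indicator (B i) w))"
    proof (rule sum_mono)
      fix i assume "i \<in> {..<N}"
      then have i: "i < N" by simp
      have "(U i + 1)\<^sup>2 \<le> (qhdist D w x0 + 3)\<^sup>2" if "w \<in> B i"
        using U_le[OF i that] U(2)[of i] i by (intro power_mono) auto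
      then show "c i * indicator (B i) w \<le> (qhdist D w x0 + 3)\<^sup>2 / 5 * (L i * indicator (B i) w)"
        using L(2)[OF i] unfolding c_def indicator_def by (auto simp: field_simps mult_left_mono)
    qed
    also have "\<dots> = (qhdist D w x0 + 3)\<^sup>2 / 5 * (\<Sum>i<N. L i * indicator (B i) w)"
      by (rule sum_distrib_left[symmetric])
    also have "\<dots> \<le> (qhdist D w x0 + 3)\<^sup>2 / 5 * (9/2)"
      using quasigeodesic_ball_overlap[OF qg p L] unfolding B_def \<delta>_def by (intro mult_left_mono) auto
    also have "\<dots> \<le> (qhdist D w x0 + 3)\<^sup>2" by simp
    finally show ?thesis using True by (simp add: ennreal_leI)
  qed
  then have "ennreal (\<Sum>i<N. c i * (\<delta> i / 2)\<^sup>2 / 4) \<le> tail_mass"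
    unfolding tail_mass_def B_def using c0 \<delta>_pos
    by (intro sum_ball_areas_le_nn_integral) auto
  then have "enn2real (ennreal (\<Sum>i<N. c i * (\<delta> i / 2)\<^sup>2 / 4)) \<le> enn2real tail_mass"
    using tail_mass_finite by (intro enn2real_mono) auto
  moreover have "0 \<le> (\<Sum>i<N. c i * (\<delta> i / 2)\<^sup>2 / 4)" using c0 by (intro sum_nonneg) auto
  ultimately have "(\<Sum>i<N. c i * (\<delta> i / 2)\<^sup>2 / 4) \<le> enn2real tail_mass" by simp
  moreover have "(\<Sum>i<N. L i * (U i + 1)\<^sup>2 * (\<delta> i)\<^sup>2) = 80 * (\<Sum>i<N. c i * (\<delta> i / 2)\<^sup>2 / 4)"
    unfolding c_def by (simp add: sum_distrib_left power_divide)
  ultimately show ?thesis unfolding U_def \<delta>_def by linarith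
qed

lemma quasigeodesic_length_le:
  assumes qg: "qh_quasigeodesic D h t0 t1" and h0: "h t0 = x0"
    and st: "t0 \<le> s" "s \<le> t" "t \<le> t1" and J: "1 \<le> J" and far: "J - 1 \<le> qhdist D x0 (h s)"
  shows "curve_length h s t \<le> ereal (length_const / sqrt J)"
proof -
  obtain N where N: "N \<ge> 1"
    and short: "\<And>i. i < N \<Longrightarrow> qh_length D h (uniform_partition s t N i) (uniform_partition s t N (Suc i)) \<le> ereal (3/2)"
    and pieces: "curve_length h s t \<le> (\<Sum>i<N. ereal (2 * bdist D (h (uniform_partition s t N i))) *
       qh_length D h (uniform_partition s t N i) (uniform_partition s t N (Suc i)))"
    using quasigeodesic_fine_partition[OF qg st] by blast
  define p where "p = uniform_partition s t N"
  define \<delta> where "\<delta> i = bdist D (h (p i))" for i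
  define L where "L i = real_of_ereal (qh_length D h (p i) (p (Suc i)))" for i
  define U where "U i = real_of_ereal (qh_length D h t0 (p i))" for i
  have pmono: "p i \<le> p (Suc i)" for i unfolding p_def by (rule uniform_partition_mono) (use st in auto)
  have prange: "t0 \<le> p i" "p i \<le> t1" if "i \<le> N" for i
    using uniform_partition_range[OF st(2) that] st unfolding p_def by auto
  have p0: "p 0 = s" and pN: "p N = t" using N unfolding p_def by (auto simp: uniform_partition_last)
  have L: "qh_length D h (p i) (p (Suc i)) = ereal (L i)" "0 \<le> L i" if "i < N" for i
    using qh_quasigeodesic_subarc_real[OF qg prange(1)[of i] pmono prange(2)[of "Suc i"]] that
    unfolding L_def by auto
  have L_le: "L i \<le> 3/2" if "i < N" for i using short[OF that] L(1)[OF that] unfolding p_def by simp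
  have U: "qh_length D h t0 (p i) = ereal (U i)" "0 \<le> U i" if "i \<le> N" for i
    using qh_quasigeodesic_subarc_real[OF qg order_refl prange[OF that]] unfolding U_def by auto
  have U_step: "U i + L i \<le> U (Suc i)" if "i < N" for i
  proof -
    have "qh_length D h t0 (p (Suc i)) = qh_length D h t0 (p i) + qh_length D h (p i) (p (Suc i))"
      unfolding qh_length_eq_wlength using prange[of i] that pmono
      by (intro wlength_additive) (auto simp: bdist_nonneg)
    then show ?thesis using U[of i] U[of "Suc i"] L[OF that] that by simp
  qed
  have U0: "J \<le> U 0 + 1"
  proof -
    have "eqhdist D x0 (h s) \<le> qh_length D h t0 s"
      using eqhdist_le_qh_length_quasigeodesic[OF open_D proper_D qg order_refl st(1)] st h0 by simp
    moreover have "eqhdist D x0 (h s) = ereal (qhdist D x0 (h s))"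
      using qg st x0_in_D unfolding qh_quasigeodesic_def
      by (intro eqhdist_eq_qhdist[OF open_D proper_D connected_D]) auto
    ultimately show ?thesis using far U[of 0] p0 by simp
  qed
  have "curve_length h s t \<le> ereal (\<Sum>i<N. 2 * \<delta> i * L i)"
    using pieces L(1) unfolding p_def[symmetric] \<delta>_def[symmetric] by simp
  also have "(\<Sum>i<N. 2 * \<delta> i * L i) \<le> (1 / sqrt J) * (\<Sum>i<N. L i * (U i + 1)\<^sup>2 * (\<delta> i)\<^sup>2) +
      1 / (1 / sqrt J) * (\<Sum>i<N. L i / (U i + 1)\<^sup>2)"
  proof (rule sum_two_mul_le_amgm)
    show "0 < 1 / sqrt J" using J by simp
    show "0 < (U i + 1)\<^sup>2" if "i < N" for i using U(2)[of i] that by (intro zero_less_power) auto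
  qed (use L(2) in auto)
  also have "\<dots> \<le> (1 / sqrt J) * (80 * enn2real tail_mass) + 1 / (1 / sqrt J) * (3 / J)"
  proof (intro add_mono mult_left_mono)
    show "(\<Sum>i<N. L i * (U i + 1)\<^sup>2 * (\<delta> i)\<^sup>2) \<le> 80 * enn2real tail_mass"
      using quasigeodesic_ball_sum_le[OF qg h0 pmono prange(1)[of 0] prange(2)[of N] L L_le]
      unfolding U_def \<delta>_def by simp
    show "(\<Sum>i<N. L i / (U i + 1)\<^sup>2) \<le> 3 / J"
      by (rule sum_div_square_le) (use U L L_le U_step U0 J in auto)
  qed (use J in auto)
  also have "\<dots> = length_const / sqrt J"
    using J unfolding length_const_def by (simp add: field_simps real_sqrt_mult_self flip: real_sqrt_mult)
  finally show ?thesis by simp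
qed

lemma quasigeodesic_length_le_reversed:
  assumes qg: "qh_quasigeodesic D h t1 t0" and h0: "h t0 = x0"
    and st: "t1 \<le> s" "s \<le> t" "t \<le> t0" and J: "1 \<le> J" and far: "J - 1 \<le> qhdist D x0 (h t)"
  shows "curve_length h s t \<le> ereal (length_const / sqrt J)"
proof -
  from qh_quasigeodesic_reflect[OF qg, of 0]
  have "curve_length (\<lambda>x. h (0 - x)) (0 - t) (0 - s) \<le> ereal (length_const / sqrt J)"
  proof (rule quasigeodesic_length_le)
    show "J - 1 \<le> qhdist D x0 (h (0 - (0 - t)))" using far by simp
  qed (use st h0 J in auto)
  moreover have "curve_length h s t \<le> curve_length (\<lambda>x. h (0 - x)) (0 - t) (0 - s)"
    unfolding curve_length_eq_wlength using wlength_reflect_le[of "\<lambda>_. 1" "\<lambda>x. h (0 - x)" 0 s t]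
    by simp
  ultimately show ?thesis by (rule order_trans[rotated])
qed

lemma qh_geodesic_length_le:
  assumes geo: "qh_geodesic D g I" and I: "is_interval I" and t0: "t0 \<in> I" "g t0 = x0"
    and st: "s \<in> I" "t \<in> I" "s \<le> t" and J: "1 \<le> J"
    and far: "\<And>u. s \<le> u \<Longrightarrow> u \<le> t \<Longrightarrow> J - 1 \<le> qhdist D x0 (g u)"
  shows "curve_length g s t \<le> ereal (2 * length_const / sqrt J)"
proof -
  have mem: "x \<in> I" if "s \<le> x" "x \<le> t" for x
    using I st that unfolding is_interval_1 by blast
  have right: "curve_length g u v \<le> ereal (length_const / sqrt J)"
    if "t0 \<le> u" "u \<le> v" "s \<le> u" "v \<le> t" for u v
  proof -
    have "qh_quasigeodesic D g t0 v"
      using that mem[of v] by (intro qh_geodesic_imp_quasigeodesic[OF geo I t0(1)]) auto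
    moreover have "J - 1 \<le> qhdist D x0 (g u)" using that by (intro far) auto
    ultimately show ?thesis using that t0(2) J by (intro quasigeodesic_length_le[of g t0 v u v J]) auto
  qed
  have left: "curve_length g u v \<le> ereal (length_const / sqrt J)"
    if "u \<le> v" "v \<le> t0" "s \<le> u" "v \<le> t" for u v
  proof -
    have "qh_quasigeodesic D g u t0"
      using that mem[of u] by (intro qh_geodesic_imp_quasigeodesic[OF geo I _ t0(1)]) auto
    moreover have "J - 1 \<le> qhdist D x0 (g v)" using that by (intro far) auto
    ultimately show ?thesis using that t0(2) J by (intro quasigeodesic_length_le_reversed[of g u t0 u v J]) auto
  qed
  have half: "ereal (length_const / sqrt J) \<le> ereal (2 * length_const / sqrt J)"
    using length_const_pos J by (simp add: divide_right_mono)
  consider "t0 \<le> s" | "t \<le> t0" | "s < t0" "t0 < t" by linarith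
  then show ?thesis
  proof cases
    case 1
    then show ?thesis using order_trans[OF right[of s t] half] st by simp
  next
    case 2
    then show ?thesis using order_trans[OF left[of s t] half] st by simp
  next
    case 3
    have "curve_length g s t = curve_length g s t0 + curve_length g t0 t"
      unfolding curve_length_eq_wlength using 3 by (intro wlength_additive) auto
    also have "\<dots> \<le> ereal (length_const / sqrt J) + ereal (length_const / sqrt J)"
      using left[of s t0] right[of t0 t] 3 by (intro add_mono) auto
    also have "\<dots> = ereal (2 * length_const / sqrt J)" by simp
    finally show ?thesis .
  qed
qed

lemma domain_subset_cball: "D \<subseteq> cball x0 length_const"
proof
  fix z assume z: "z \<in> D"
  obtain g where qg: "qh_quasigeodesic D g 0 1" "g 0 = x0" "g 1 = z"
    using near_minimal_quasigeodesic[OF x0_in_D z] .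
  have "ereal (cmod (g 1 - g 0)) \<le> curve_length g 0 1"
    using wlength_ge_chord[where a=0 and b=1 and w="\<lambda>_. 1" and g=g] by (simp add: curve_length_eq_wlength)
  also have "curve_length g 0 1 \<le> ereal (length_const / sqrt 1)"
    by (rule quasigeodesic_length_le[OF qg(1,2)]) (auto simp: qhdist_nonneg)
  finally show "z \<in> cball x0 length_const"
    using qg by (simp add: dist_norm norm_minus_commute)
qed

end

section \<open>Whitney layers\<close>

lemma jidx_le:
  assumes Q: "Q \<in> W" and qs: "qhdist_set D x0 Q \<le> real n" and n: "1 \<le> n"
  shows "jidx D W x0 Q \<le> n"
proof -
  let ?qs = "qhdist_set D x0 Q"
  have layer: "Q \<in> Dlayer D W x0 j \<longleftrightarrow> 1 \<le> j \<and> ?qs \<le> real j" for j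
    using Q unfolding Dlayer_def by auto
  define m where "m = (LEAST j::nat. 1 \<le> j \<and> ?qs \<le> real j)"
  have ex: "1 \<le> n \<and> ?qs \<le> real n" using qs n by auto
  have mP: "1 \<le> m \<and> ?qs \<le> real m" unfolding m_def by (rule LeastI[of _ n]) (rule ex)
  have mn: "m \<le> n" unfolding m_def by (rule Least_le) (rule ex)
  have mmin: "\<not> (1 \<le> j \<and> ?qs \<le> real j)" if "j < m" for j
    using not_less_Least[of j "\<lambda>j. 1 \<le> j \<and> ?qs \<le> real j"] that unfolding m_def by auto
  have "jidx D W x0 Q = m"
    unfolding jidx_def
  proof (rule the_equality)
    show "1 \<le> m \<and> Q \<in> Dlayer D W x0 m - Dlayer D W x0 (m - 1)"
      using mP mmin[of "m - 1"] layer[of m] layer[of "m - 1"] by auto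
    fix j assume j: "1 \<le> j \<and> Q \<in> Dlayer D W x0 j - Dlayer D W x0 (j - 1)"
    then have "\<not> j < m" using mmin layer[of j] by blast
    moreover have "\<not> m < j"
    proof
      assume "m < j"
      then have "?qs \<le> real (j - 1)" using mP by linarith
      then show False using j layer[of "j - 1"] mP \<open>m < j\<close> by auto
    qed
    ultimately show "j = m" by simp
  qed
  then show ?thesis using mn by simp
qed

lemma qhdist_ge_of_jidx_ge:
  assumes W: "whitney D W" and x: "x \<in> D" and j0: "1 \<le> j0"
    and big: "\<forall>Q\<in>W. x \<in> Q \<longrightarrow> j0 \<le> jidx D W x0 Q"
  shows "real j0 - 1 \<le> qhdist D x0 x"
proof (rule ccontr)
  assume "\<not> real j0 - 1 \<le> qhdist D x0 x"
  then have lt: "qhdist D x0 x < real j0 - 1" by simp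
  then have j2: "1 \<le> j0 - 1" using qhdist_nonneg[of D x0 x] by linarith
  obtain Q where Q: "Q \<in> W" "x \<in> Q" using W x unfolding whitney_def by auto
  have "qhdist_set D x0 Q \<le> qhdist D x0 x"
    unfolding qhdist_set_def using Q(2) by (intro cINF_lower bdd_belowI[where m=0]) (auto simp: qhdist_nonneg)
  then have "jidx D W x0 Q \<le> j0 - 1" using lt j2 by (intro jidx_le[OF Q(1)]) (auto simp: of_nat_diff)
  then show False using big Q j2 by fastforce
qed

context qh_integrable_domain
begin

lemma qh_geodesic_length_on_le:
  assumes W: "whitney D W" and geo: "qh_geodesic D g I" and I: "is_interval I" and "x0 \<in> g ` I"
    and n: "n \<ge> 1" and J: "is_interval J" "J \<subseteq> I"
    and far: "\<forall>Q\<in>W. Q \<inter> g ` J \<noteq> {} \<longrightarrow> jidx D W x0 Q \<ge> n"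
  shows "curve_length_on g J \<le> ereal (2 * length_const / sqrt (real n))"
  unfolding curve_length_on_def
proof (rule SUP_least)
  fix st assume "st \<in> {(s, t). s \<in> J \<and> t \<in> J \<and> s \<le> t}"
  then obtain s t where st_eq: "st = (s, t)" and st: "s \<in> J" "t \<in> J" "s \<le> t" by auto
  obtain t0 where t0: "t0 \<in> I" "g t0 = x0" using \<open>x0 \<in> g ` I\<close> by auto
  have far_u: "real n - 1 \<le> qhdist D x0 (g u)" if "s \<le> u" "u \<le> t" for u
  proof (rule qhdist_ge_of_jidx_ge[OF W _ n])
    have "u \<in> J" using J(1) st that unfolding is_interval_1 by blast
    then show "g u \<in> D" "\<forall>Q\<in>W. g u \<in> Q \<longrightarrow> n \<le> jidx D W x0 Q"
      using geo J(2) far unfolding qh_geodesic_def by blast+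
  qed
  have "curve_length g s t \<le> ereal (2 * length_const / sqrt (real n))"
  proof (rule qh_geodesic_length_le[OF geo I t0])
    show "s \<in> I" "t \<in> I" using st J(2) by auto
    show "1 \<le> real n" using n by simp
  qed (use st far_u in auto)
  then show "curve_length g (fst st) (snd st) \<le> ereal (2 * length_const / sqrt (real n))"
    using st_eq by simp
qed

end

theorem lemma2p6:
  fixes D :: "complex set" and x0 :: complex and W :: "complex set set"
  assumes "open D" and "connected D" and "D \<noteq> UNIV" and "x0 \<in> D"
    and "(\<integral>\<^sup>+ x \<in> D. ennreal ((qhdist D x x0)\<^sup>2) \<partial>lborel) < \<infinity>"
    and "whitney D W"
  shows "(\<exists>C>0. \<forall>g a b I j0 J.
            a < b \<and> (I = {a..b} \<or> I = {a..<b}) \<and> qh_geodesic D g I \<and> x0 \<in> g ` I \<and>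
            j0 \<ge> 1 \<and> is_interval J \<and> J \<noteq> {} \<and> J \<subseteq> I \<and>
            (\<forall>Q\<in>W. Q \<inter> g ` J \<noteq> {} \<longrightarrow> jidx D W x0 Q \<ge> j0)
            \<longrightarrow> curve_length_on g J \<le> ereal (C / sqrt (real j0)))
         \<and> bounded D"
proof -
  interpret qh_integrable_domain D x0
    using assms by unfold_locales auto
  show ?thesis
  proof (intro conjI exI[of _ "2 * length_const"] allI impI)
    show "0 < 2 * length_const" using length_const_pos by simp
    show "bounded D" using domain_subset_cball bounded_cball bounded_subset by blast
    fix g a b I j0 J
    assume "a < b \<and> (I = {a..b} \<or> I = {a..<b}) \<and> qh_geodesic D g I \<and> x0 \<in> g ` I \<and>
      j0 \<ge> 1 \<and> is_interval J \<and> J \<noteq> {} \<and> J \<subseteq> I \<and> (\<forall>Q\<in>W. Q \<inter> g ` J \<noteq> {} \<longrightarrow> jidx D W x0 Q \<ge> j0)"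
    moreover have "is_interval {a..b}" "is_interval {a..<b}" by (auto simp: is_interval_1)
    ultimately show "curve_length_on g J \<le> ereal (2 * length_const / sqrt (real j0))"
      using qh_geodesic_length_on_le[OF assms(6), where g=g and I=I and n=j0 and J=J] by auto
  qed
qed

end
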